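(* Let $d\ge1$ and let $\mathcal{F}\subseteq\binom{\mathbb{N}}{d}$ be a finite family. Then $\mathrm{Inc}(\mathcal{C}(\mathcal{F}))\subseteq\mathcal{C}(\mathrm{Inc}(\mathcal{F}))$.
   Context: $\mathbb{N}=\{1,2,3,\dots\}$. For $d\ge1$, $\binom{\mathbb{N}}{d}$ is the set of $d$-element subsets of $\mathbb{N}$; an element is written $\mathbf{u}=(u_1,\ldots,u_d)$ with $u_1<\cdots<u_d$. The squashed order on $\binom{\mathbb{N}}{d}$: $\mathbf{u}<\mathbf{v}$ iff the largest element of the symmetric difference $(\mathbf{u}\setminus\mathbf{v})\cup(\mathbf{v}\setminus\mathbf{u})$ belongs to $\mathbf{v}$. For a finite family $\mathcal{F}\subseteq\binom{\mathbb{N}}{d}$, its compression $\mathcal{C}(\mathcal{F})$ is the set of the $|\mathcal{F}|$ smallest elements of $\binom{\mathbb{N}}{d}$ in the squashed order. Let $\mathrm{Inc}_1$ be the set of maps $\pi\colon\mathbb{N}\to\mathbb{N}$ with $\pi(j)<\pi(j+1)$ and $\pi(j)\le j+1$ for all $j\ge1$, acting by $\pi(\mathbf{u})=(\pi(u_1),\ldots,\pi(u_d))$. For $\mathcal{F}\subseteq\binom{\mathbb{N}}{d}$, $\mathrm{Inc}(\mathcal{F})=\{\pi(\mathbf{u})\mid \mathbf{u}\in\mathcal{F},\ \pi\in\mathrm{Inc}_1\}$ (finite when $\mathcal{F}$ is finite). *)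

theory Defs
  imports Main
begin

definition binomN :: "nat \<Rightarrow> nat set set" where
  "binomN d = {u. u \<subseteq> {1..} \<and> finite u \<and> card u = d}"

definition sq_less :: "nat set \<Rightarrow> nat set \<Rightarrow> bool" where
  "sq_less u v \<longleftrightarrow> u \<noteq> v \<and> Max ((u - v) \<union> (v - u)) \<in> v"

definition compression :: "nat \<Rightarrow> nat set set \<Rightarrow> nat set set" where
  "compression d F = {u \<in> binomN d. card {w \<in> binomN d. sq_less w u} < card F}"

text \<open>Inc_1: maps pi : N -> N with pi j < pi (j+1) and pi j \<le> j+1 for all j \<ge> 1
  (values at 0 are irrelevant).\<close>
definition Inc1 :: "(nat \<Rightarrow> nat) set" where
  "Inc1 = {\<pi>. (\<forall>j\<ge>1. \<pi> j \<ge> 1 \<and> \<pi> j < \<pi> (Suc j) \<and> \<pi> j \<le> j + 1)}"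

definition Inc :: "nat set set \<Rightarrow> nat set set" where
  "Inc F = {\<pi> ` u | u \<pi>. u \<in> F \<and> \<pi> \<in> Inc1}"

end

theory Submission
  imports Defs
begin

text \<open>
  On a set of positive integers every map of \<open>Inc1\<close> acts as a skip map \<open>skip k\<close>
  (fix the elements below \<open>k\<close>, add one to the others), and the shift \<open>Suc ` u\<close> is the largest
  of these images in the squashed order. Let \<open>P\<^sub>d(m)\<close> (\<open>seg_with1 d m\<close>) be the number of
  members of the first \<open>m\<close> sets of the squashed order that contain 1, and let
  \<open>Q\<^sub>d(m) = m - P\<^sub>d(m)\<close> (\<open>seg_without1 d m\<close>); the shifts of the first \<open>Q\<^sub>d(m)\<close> sets are
  exactly the other members. Hence \<open>Inc(C(F)) \<subseteq> C(Inc F)\<close> as soon as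
  \<open>|F| \<le> Q\<^sub>d(|Inc F|)\<close>.

  This Kruskal--Katona-type bound is proved by induction on \<open>d\<close> and on the largest element,
  splitting a family according to whether its sets contain 1. The numerical input is
  \<open>Q\<^sub>d\<^sub>-\<^sub>1(b) + Q\<^sub>d(a) \<le> Q\<^sub>d(a + b)\<close> whenever \<open>Q\<^sub>d(a + b) < a\<close>, which follows from the block
  structure of the squashed order (the \<open>d\<close>-subsets of \<open>{1..s}\<close> form an initial segment, and
  complementation in \<open>{1..s}\<close> reverses the order) together with the subadditivity of \<open>P\<^sub>d\<close>; the
  latter is proved simultaneously with the superadditivity of \<open>m \<mapsto> \<Sum>u\<in>C\<^sub>d(m). Min u\<close>.
\<close>

section \<open>Sets of positive integers and the squashed order\<close>

lemma binomND:
  assumes "u \<in> binomN d"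
  shows "finite u" "card u = d" "u \<subseteq> {1..}" "0 \<notin> u"
  using assms unfolding binomN_def by auto

lemma binomNI: "finite u \<Longrightarrow> card u = d \<Longrightarrow> 0 \<notin> u \<Longrightarrow> u \<in> binomN d"
  unfolding binomN_def by (auto simp: Suc_le_eq) (metis gr0I)

lemma binomN_0: "binomN 0 = {{}}"
  unfolding binomN_def by (auto simp: card_eq_0_iff)

lemma binomN_nonempty: "u \<in> binomN d \<Longrightarrow> d \<ge> 1 \<Longrightarrow> u \<noteq> {}"
  using binomND(2) by fastforce

lemma binomN_Diff_singleton:
  assumes "u \<in> binomN d" "x \<in> u"
  shows "u - {x} \<in> binomN (d - 1)"
  using binomND[OF assms(1)] assms(2) by (intro binomNI) auto

lemma infinite_binomN:
  assumes "d \<ge> 1"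
  shows "infinite (binomN d)"
proof -
  have "(\<lambda>t. {Suc t..<Suc t + d}) ` UNIV \<subseteq> binomN d"
    by (auto intro!: binomNI)
  moreover have "inj (\<lambda>t::nat. {Suc t..<Suc t + d})"
  proof (rule injI)
    fix x y :: nat assume "{Suc x..<Suc x + d} = {Suc y..<Suc y + d}"
    moreover have "Suc x \<in> {Suc x..<Suc x + d}" "Suc y \<in> {Suc y..<Suc y + d}" using assms by auto
    ultimately have "Suc x \<ge> Suc y" "Suc y \<ge> Suc x" by auto
    then show "x = y" by simp
  qed
  ultimately show ?thesis by (meson finite_imageD finite_subset infinite_UNIV_nat)
qed

lemma card_filter_add_card_filter_not:
  assumes "finite A"
  shows "card {x \<in> A. P x} + card {x \<in> A. \<not> P x} = card A"
proof -
  have "A = {x \<in> A. P x} \<union> {x \<in> A. \<not> P x}" by blast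
  then show ?thesis using assms by (metis (no_types, lifting) card_Un_disjoint disjoint_iff
      finite_Un mem_Collect_eq)
qed

lemma sq_less_iff:
  assumes "finite u" "finite v"
  shows "sq_less u v \<longleftrightarrow> (\<exists>a. a \<in> v \<and> a \<notin> u \<and> (\<forall>x>a. x \<in> u \<longleftrightarrow> x \<in> v))"
proof
  assume h: "sq_less u v"
  let ?D = "(u - v) \<union> (v - u)"
  have ne: "?D \<noteq> {}" using h unfolding sq_less_def by blast
  have fD: "finite ?D" using assms by auto
  define a where "a = Max ?D"
  have "a \<in> v" using h unfolding sq_less_def a_def by blast
  moreover have "a \<in> ?D" using Max_in[OF fD ne] a_def by simp
  moreover have "x \<in> u \<longleftrightarrow> x \<in> v" if "x > a" for x
    using that Max_ge[OF fD] a_def by fastforce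
  ultimately show "\<exists>a. a \<in> v \<and> a \<notin> u \<and> (\<forall>x>a. x \<in> u \<longleftrightarrow> x \<in> v)" by blast
next
  assume "\<exists>a. a \<in> v \<and> a \<notin> u \<and> (\<forall>x>a. x \<in> u \<longleftrightarrow> x \<in> v)"
  then obtain a where a: "a \<in> v" "a \<notin> u" "\<forall>x>a. x \<in> u \<longleftrightarrow> x \<in> v" by blast
  let ?D = "(u - v) \<union> (v - u)"
  have "Max ?D = a"
  proof (rule Max_eqI)
    show "finite ?D" using assms by auto
    show "y \<le> a" if "y \<in> ?D" for y using that a(3) by (meson UnE Diff_iff not_le)
  qed (use a in auto)
  then show "sq_less u v" unfolding sq_less_def using a by auto
qed

lemma sq_less_irrefl: "\<not> sq_less u u"
  unfolding sq_less_def by simp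

lemma sq_less_trans:
  assumes "finite u" "finite v" "finite w" "sq_less u v" "sq_less v w"
  shows "sq_less u w"
proof -
  obtain a where a: "a \<in> v" "a \<notin> u" "\<forall>x>a. x \<in> u \<longleftrightarrow> x \<in> v"
    using assms(1,2,4) sq_less_iff by blast
  obtain b where b: "b \<in> w" "b \<notin> v" "\<forall>x>b. x \<in> v \<longleftrightarrow> x \<in> w"
    using assms(2,3,5) sq_less_iff by blast
  have "a \<noteq> b" using a b by blast
  then consider "a < b" | "b < a" by linarith
  then show ?thesis
  proof cases
    case 1
    then have "b \<notin> u" using a(3) b(2) by blast
    then show ?thesis using sq_less_iff[OF assms(1,3)] a b 1 by (metis order.strict_trans)
  next
    case 2
    then have "a \<in> w" using b(3) a(1) by blast
    then show ?thesis using sq_less_iff[OF assms(1,3)] a b 2 by (metis order.strict_trans)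
  qed
qed

lemma sq_less_asym:
  assumes "finite u" "finite v" "sq_less u v"
  shows "\<not> sq_less v u"
  using assms sq_less_trans sq_less_irrefl by blast

lemma sq_less_total:
  assumes "finite u" "finite v" "u \<noteq> v"
  shows "sq_less u v \<or> sq_less v u"
proof -
  let ?D = "(u - v) \<union> (v - u)"
  have "Max ?D \<in> ?D" using assms by (intro Max_in) auto
  moreover have "(v - u) \<union> (u - v) = ?D" by blast
  ultimately show ?thesis unfolding sq_less_def using assms(3) by auto
qed

lemma sq_less_strict_mono_image:
  assumes "strict_mono g" "finite u" "finite v"
  shows "sq_less (g ` u) (g ` v) \<longleftrightarrow> sq_less u v"
proof (cases "u = v")
  case False
  let ?D = "(u - v) \<union> (v - u)"
  have inj: "inj g" using assms(1) by (rule strict_mono_imp_inj_on)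
  have D: "(g ` u - g ` v) \<union> (g ` v - g ` u) = g ` ?D"
    using inj by (simp add: image_Un image_set_diff)
  have "Max (g ` ?D) = g (Max ?D)"
    using assms False by (intro mono_Max_commute[symmetric]) (auto simp: strict_mono_mono)
  then show ?thesis
    unfolding sq_less_def D using inj False by (simp add: inj_image_eq_iff inj_image_mem_iff)
qed (simp add: sq_less_irrefl)

lemma sq_less_insert:
  assumes "finite u" "finite v" "c \<notin> u" "c \<notin> v"
  shows "sq_less (insert c u) (insert c v) \<longleftrightarrow> sq_less u v"
proof -
  have "(insert c u - insert c v) \<union> (insert c v - insert c u) = (u - v) \<union> (v - u)"
    using assms by blast
  moreover have "insert c u = insert c v \<longleftrightarrow> u = v" using assms by (metis Diff_insert_absorb)
  moreover have "Max ((u - v) \<union> (v - u)) \<in> insert c v \<longleftrightarrow> Max ((u - v) \<union> (v - u)) \<in> v"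
    if "u \<noteq> v"
  proof -
    have "Max ((u - v) \<union> (v - u)) \<in> (u - v) \<union> (v - u)"
      using assms that by (intro Max_in) auto
    then show ?thesis using assms by blast
  qed
  ultimately show ?thesis unfolding sq_less_def by auto
qed

lemma sq_less_atMost:
  assumes "finite w" "finite v" "sq_less w v" "v \<subseteq> {..s}"
  shows "w \<subseteq> {..s}"
proof
  fix x assume x: "x \<in> w"
  obtain a where a: "a \<in> v" "a \<notin> w" "\<forall>x>a. x \<in> w \<longleftrightarrow> x \<in> v"
    using assms(1-3) sq_less_iff by blast
  show "x \<in> {..s}"
  proof (cases "x \<le> a")
    case True then show ?thesis using a(1) assms(4) by auto
  next
    case False then show ?thesis using a(3) x assms(4) by auto
  qed
qed

section \<open>Initial segments\<close>

definition sq_rank :: "nat \<Rightarrow> nat set \<Rightarrow> nat" where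
  "sq_rank d u = card {w \<in> binomN d. sq_less w u}"

definition sq_segment :: "nat \<Rightarrow> nat \<Rightarrow> nat set set" where
  "sq_segment d m = {u \<in> binomN d. sq_rank d u < m}"

lemma compression_eq_sq_segment: "compression d F = sq_segment d (card F)"
  by (simp add: compression_def sq_segment_def sq_rank_def)

lemma finite_sq_below:
  assumes "finite v"
  shows "finite {w \<in> binomN d. sq_less w v}"
proof (rule finite_subset)
  show "{w \<in> binomN d. sq_less w v} \<subseteq> Pow {..Max v}"
    using sq_less_atMost[OF _ assms, of _ "Max v"] Max_ge[OF assms] binomND(1) by blast
qed simp

lemma sq_rank_less:
  assumes "u \<in> binomN d" "v \<in> binomN d" "sq_less u v"
  shows "sq_rank d u < sq_rank d v"
proof -
  have "{w \<in> binomN d. sq_less w u} \<subseteq> {w \<in> binomN d. sq_less w v}"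
    using sq_less_trans[OF binomND(1) binomND(1)[OF assms(1)] binomND(1)[OF assms(2)] _ assms(3)]
    by blast
  moreover have "u \<in> {w \<in> binomN d. sq_less w v}" "u \<notin> {w \<in> binomN d. sq_less w u}"
    using assms sq_less_irrefl by auto
  ultimately have "{w \<in> binomN d. sq_less w u} \<subset> {w \<in> binomN d. sq_less w v}" by blast
  moreover have "finite {w \<in> binomN d. sq_less w v}"
    using finite_sq_below binomND(1)[OF assms(2)] by blast
  ultimately show ?thesis unfolding sq_rank_def by (rule psubset_card_mono[rotated])
qed

lemma sq_rank_less_iff:
  assumes "u \<in> binomN d" "v \<in> binomN d"
  shows "sq_rank d u < sq_rank d v \<longleftrightarrow> sq_less u v"
proof
  assume r: "sq_rank d u < sq_rank d v"
  then have "u \<noteq> v" by auto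
  then have "sq_less u v \<or> sq_less v u"
    using sq_less_total[OF binomND(1)[OF assms(1)] binomND(1)[OF assms(2)]] by blast
  then show "sq_less u v" using sq_rank_less[OF assms(2,1)] r by auto
qed (rule sq_rank_less[OF assms])

lemma inj_on_sq_rank: "inj_on (sq_rank d) (binomN d)"
proof (rule inj_onI)
  fix u v assume uv: "u \<in> binomN d" "v \<in> binomN d" "sq_rank d u = sq_rank d v"
  then have "\<not> sq_less u v" "\<not> sq_less v u"
    using sq_rank_less_iff[OF uv(1,2)] sq_rank_less_iff[OF uv(2,1)] by auto
  then show "u = v" using sq_less_total[OF binomND(1)[OF uv(1)] binomND(1)[OF uv(2)]] by blast
qed

lemma sq_rank_image_below:
  assumes "u \<in> binomN d"
  shows "sq_rank d ` {w \<in> binomN d. sq_less w u} = {..<sq_rank d u}"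
proof -
  let ?D = "{w \<in> binomN d. sq_less w u}"
  have "sq_rank d ` ?D \<subseteq> {..<sq_rank d u}" using sq_rank_less assms by auto
  moreover have "card (sq_rank d ` ?D) = card ?D"
    by (intro card_image inj_on_subset[OF inj_on_sq_rank]) auto
  moreover have "card ?D = sq_rank d u" by (simp add: sq_rank_def)
  ultimately show ?thesis by (intro card_subset_eq) auto
qed

lemma sq_rank_surj:
  assumes "d \<ge> 1"
  shows "\<exists>u\<in>binomN d. sq_rank d u = m"
proof -
  have "infinite (sq_rank d ` binomN d)"
    using infinite_binomN[OF assms] inj_on_sq_rank finite_image_iff by blast
  then have "\<not> (\<forall>n\<in>sq_rank d ` binomN d. n < Suc m)"
    using finite_nat_set_iff_bounded by blast
  then obtain u where u: "u \<in> binomN d" "m < sq_rank d u" by auto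
  then have "m \<in> sq_rank d ` {w \<in> binomN d. sq_less w u}"
    using sq_rank_image_below by simp
  then show ?thesis by blast
qed

lemma bij_betw_sq_rank_segment:
  assumes "d \<ge> 1"
  shows "bij_betw (sq_rank d) (sq_segment d m) {..<m}"
  unfolding bij_betw_def
proof
  show "inj_on (sq_rank d) (sq_segment d m)"
    using inj_on_sq_rank unfolding sq_segment_def by (rule inj_on_subset) auto
  show "sq_rank d ` sq_segment d m = {..<m}"
  proof
    show "sq_rank d ` sq_segment d m \<subseteq> {..<m}" unfolding sq_segment_def by auto
    show "{..<m} \<subseteq> sq_rank d ` sq_segment d m"
    proof
      fix i assume "i \<in> {..<m}"
      obtain u where "u \<in> binomN d" "sq_rank d u = i" using sq_rank_surj[OF assms] by blast
      then have "u \<in> sq_segment d m" using \<open>i \<in> {..<m}\<close> unfolding sq_segment_def by simp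
      then show "i \<in> sq_rank d ` sq_segment d m" using \<open>sq_rank d u = i\<close> by blast
    qed
  qed
qed

lemma card_sq_segment:
  assumes "d \<ge> 1"
  shows "card (sq_segment d m) = m"
proof -
  have "card (sq_segment d m) = card {..<m}"
    using bij_betw_sq_rank_segment[OF assms] by (rule bij_betw_same_card)
  then show ?thesis by simp
qed

lemma sq_segment_0: "sq_segment 0 m = (if m = 0 then {} else {{}})"
proof -
  have "sq_rank 0 {} = 0" unfolding sq_rank_def binomN_0 by (simp add: sq_less_irrefl)
  then show ?thesis unfolding sq_segment_def binomN_0 by auto
qed

lemma finite_sq_segment: "finite (sq_segment d m)"
proof (cases "d = 0")
  case False
  then have "bij_betw (sq_rank d) (sq_segment d m) {..<m}" by (intro bij_betw_sq_rank_segment) simp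
  then show ?thesis using bij_betw_finite by blast
qed (simp add: sq_segment_0)

lemma sq_segment_subset: "sq_segment d m \<subseteq> binomN d"
  unfolding sq_segment_def by auto

lemma sq_segment_mono: "m \<le> m' \<Longrightarrow> sq_segment d m \<subseteq> sq_segment d m'"
  unfolding sq_segment_def by auto

lemma sq_segment_downward_closed:
  assumes "u \<in> sq_segment d m" "w \<in> binomN d" "sq_less w u"
  shows "w \<in> sq_segment d m"
proof -
  have "sq_rank d w < sq_rank d u" using sq_rank_less assms sq_segment_subset by blast
  then show ?thesis using assms unfolding sq_segment_def by simp
qed

lemma sq_below_eq_sq_segment:
  assumes "v \<in> binomN d"
  shows "{w \<in> binomN d. sq_less w v} = sq_segment d (sq_rank d v)"
  unfolding sq_segment_def using sq_rank_less_iff[OF _ assms] by auto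

lemma downward_closed_eq_sq_segment:
  assumes "d \<ge> 1" "finite X" "X \<subseteq> binomN d"
    and down: "\<And>u w. u \<in> X \<Longrightarrow> w \<in> binomN d \<Longrightarrow> sq_less w u \<Longrightarrow> w \<in> X"
  shows "X = sq_segment d (card X)"
proof -
  have "X \<subseteq> sq_segment d (card X)"
  proof
    fix u assume u: "u \<in> X"
    have "{w \<in> binomN d. sq_less w u} \<subseteq> X - {u}" using down u sq_less_irrefl by blast
    then have "sq_rank d u \<le> card (X - {u})" unfolding sq_rank_def using assms(2) by (intro card_mono) auto
    also have "\<dots> < card X" using u assms(2) by (rule card_Diff1_less[rotated])
    finally show "u \<in> sq_segment d (card X)" unfolding sq_segment_def using u assms(3) by auto
  qed
  then show ?thesis
    using finite_sq_segment card_sq_segment[OF assms(1)] by (simp add: card_subset_eq)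
qed

section \<open>Shifts and the sets containing 1\<close>

definition shift :: "nat set \<Rightarrow> nat set" where
  "shift u = Suc ` u"

definition cons_shift :: "nat \<Rightarrow> nat set \<Rightarrow> nat set" where
  "cons_shift j v = insert j (shift v)"

lemma inj_shift: "inj shift"
  unfolding shift_def by (rule injI) (simp add: inj_image_eq_iff)

lemma finite_shift_iff [simp]: "finite (shift u) \<longleftrightarrow> finite u"
  unfolding shift_def by (simp add: finite_image_iff)

lemma mem_shift_iff: "x \<in> shift v \<longleftrightarrow> x \<noteq> 0 \<and> x - 1 \<in> v"
  unfolding shift_def by (cases x) auto

lemma shift_binomN: "w \<in> binomN d \<Longrightarrow> shift w \<in> binomN d"
  unfolding shift_def by (intro binomNI) (auto simp: binomND card_image)

lemma sq_less_shift:
  "finite u \<Longrightarrow> finite v \<Longrightarrow> sq_less (shift u) (shift v) \<longleftrightarrow> sq_less u v"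
  unfolding shift_def by (rule sq_less_strict_mono_image) (simp add: strict_mono_Suc_iff)

lemma Min_shift:
  assumes "finite w" "w \<noteq> {}"
  shows "Min (shift w) = Suc (Min w)"
  unfolding shift_def using mono_Min_commute[of Suc w] assms by (simp add: mono_Suc)

lemma shift_notin:
  assumes "finite v" "j \<le> Min v"
  shows "j \<notin> shift v"
  using assms Min_le[OF assms(1)] unfolding shift_def by fastforce

lemma ex_shift_eq:
  assumes "u \<in> binomN d" "1 \<notin> u"
  shows "\<exists>w\<in>binomN d. shift w = u"
proof -
  have u0: "0 \<notin> u" using binomND(4)[OF assms(1)] .
  let ?w = "(\<lambda>x. x - 1) ` u"
  have "inj_on (\<lambda>x. x - 1) u"
    using u0 by (intro inj_onI) (metis Suc_pred' gr0I)
  moreover have "0 \<notin> ?w"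
    using u0 assms(2) by (auto simp: le_Suc_eq)
  ultimately have "?w \<in> binomN d" using binomND[OF assms(1)] by (intro binomNI) (auto simp: card_image)
  moreover have "\<forall>x\<in>u. Suc (x - 1) = x" using u0 by (metis Suc_pred' gr0I)
  then have "shift ?w = u" unfolding shift_def image_image by simp
  ultimately show ?thesis by blast
qed

lemma cons_shift_binomN:
  assumes "v \<in> binomN (d - 1)" "d \<ge> 1" "j \<ge> 1" "j \<notin> shift v"
  shows "cons_shift j v \<in> binomN d"
  using assms shift_binomN[OF assms(1)] unfolding cons_shift_def
  by (intro binomNI) (auto simp: binomND)

lemma one_notin_shift: "0 \<notin> v \<Longrightarrow> 1 \<notin> shift v"
  unfolding shift_def by auto

lemma cons_shift_inj:
  assumes "j \<notin> shift v" "j \<notin> shift v'" "cons_shift j v = cons_shift j v'"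
  shows "v = v'"
proof -
  have "shift v = shift v'" using assms unfolding cons_shift_def by (metis Diff_insert_absorb)
  then show ?thesis using inj_shift by (rule injD[rotated])
qed

lemma inj_on_cons_shift_one: "inj_on (cons_shift 1) (binomN e)"
proof (rule inj_onI)
  fix v v' assume vv': "v \<in> binomN e" "v' \<in> binomN e" "cons_shift 1 v = cons_shift 1 v'"
  show "v = v'"
    using cons_shift_inj[OF one_notin_shift one_notin_shift vv'(3)] binomND(4)[OF vv'(1)]
      binomND(4)[OF vv'(2)] by blast
qed

lemma sq_less_cons_shift_one:
  assumes "finite u" "finite v" "0 \<notin> u" "0 \<notin> v"
  shows "sq_less (cons_shift 1 u) (cons_shift 1 v) \<longleftrightarrow> sq_less u v"
  using assms sq_less_insert[of "shift u" "shift v" 1] one_notin_shift sq_less_shift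
  unfolding cons_shift_def by simp

lemma ex_cons_shift_one_eq:
  assumes "u \<in> binomN d" "1 \<in> u"
  shows "\<exists>v\<in>binomN (d - 1). cons_shift 1 v = u"
proof -
  have "u - {1} \<in> binomN (d - 1)" using binomN_Diff_singleton[OF assms] .
  then obtain v where "v \<in> binomN (d - 1)" "shift v = u - {1}" using ex_shift_eq by blast
  then show ?thesis unfolding cons_shift_def using assms(2) by auto
qed

lemma without1_eq_shift_image:
  assumes "X \<subseteq> binomN d"
  shows "{u \<in> X. 1 \<notin> u} = shift ` {w \<in> binomN d. shift w \<in> X}"
proof
  show "{u \<in> X. 1 \<notin> u} \<subseteq> shift ` {w \<in> binomN d. shift w \<in> X}"
  proof
    fix u assume u: "u \<in> {u \<in> X. 1 \<notin> u}"
    then obtain w where "w \<in> binomN d" "shift w = u" using ex_shift_eq assms by blast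
    then show "u \<in> shift ` {w \<in> binomN d. shift w \<in> X}" using u by blast
  qed
  show "shift ` {w \<in> binomN d. shift w \<in> X} \<subseteq> {u \<in> X. 1 \<notin> u}"
    using one_notin_shift binomND(4) by blast
qed

lemma with1_eq_cons_shift_image:
  assumes "X \<subseteq> binomN d"
  shows "{u \<in> X. 1 \<in> u} = cons_shift 1 ` {v \<in> binomN (d - 1). cons_shift 1 v \<in> X}"
proof
  show "{u \<in> X. 1 \<in> u} \<subseteq> cons_shift 1 ` {v \<in> binomN (d - 1). cons_shift 1 v \<in> X}"
  proof
    fix u assume u: "u \<in> {u \<in> X. 1 \<in> u}"
    then obtain v where "v \<in> binomN (d - 1)" "cons_shift 1 v = u"
      using ex_cons_shift_one_eq assms by blast
    then show "u \<in> cons_shift 1 ` {v \<in> binomN (d - 1). cons_shift 1 v \<in> X}" using u by blast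
  qed
  show "cons_shift 1 ` {v \<in> binomN (d - 1). cons_shift 1 v \<in> X} \<subseteq> {u \<in> X. 1 \<in> u}"
    unfolding cons_shift_def by blast
qed

lemma card_split_by_one:
  assumes "finite X" "X \<subseteq> binomN d"
  shows "card X = card {w \<in> binomN d. shift w \<in> X} + card {v \<in> binomN (d - 1). cons_shift 1 v \<in> X}"
proof -
  have "card {u \<in> X. 1 \<notin> u} = card {w \<in> binomN d. shift w \<in> X}"
    unfolding without1_eq_shift_image[OF assms(2)]
    by (intro card_image inj_on_subset[OF inj_shift]) simp
  moreover have "card {u \<in> X. 1 \<in> u} = card {v \<in> binomN (d - 1). cons_shift 1 v \<in> X}"
    unfolding with1_eq_cons_shift_image[OF assms(2)]
    by (intro card_image inj_on_subset[OF inj_on_cons_shift_one]) auto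
  ultimately show ?thesis using card_filter_add_card_filter_not[OF assms(1), of "\<lambda>u. 1 \<in> u"] by simp
qed

lemma sq_segment_vimage:
  assumes "d \<ge> 1" "f ` binomN d \<subseteq> binomN d'" "inj_on f (binomN d)"
    and mono: "\<And>w w'. w \<in> binomN d \<Longrightarrow> w' \<in> binomN d \<Longrightarrow> sq_less w w' \<Longrightarrow> sq_less (f w) (f w')"
  shows "{w \<in> binomN d. f w \<in> sq_segment d' m} =
    sq_segment d (card {w \<in> binomN d. f w \<in> sq_segment d' m})" (is "?X = _")
proof (rule downward_closed_eq_sq_segment[OF assms(1)])
  have "f ` ?X \<subseteq> sq_segment d' m" by blast
  then have "finite (f ` ?X)" using finite_sq_segment by (rule finite_subset)
  moreover have "inj_on f ?X" using assms(3) by (rule inj_on_subset) blast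
  ultimately show "finite ?X" using finite_image_iff by blast
  show "?X \<subseteq> binomN d" by blast
  fix u w assume u: "u \<in> ?X" and w: "w \<in> binomN d" "sq_less w u"
  then have "sq_less (f w) (f u)" using mono by blast
  moreover have "f w \<in> binomN d'" using assms(2) w(1) by blast
  ultimately show "w \<in> ?X" using u w(1) sq_segment_downward_closed by blast
qed

definition seg_with1 :: "nat \<Rightarrow> nat \<Rightarrow> nat" where
  "seg_with1 d m = card {u \<in> sq_segment d m. 1 \<in> u}"

definition seg_without1 :: "nat \<Rightarrow> nat \<Rightarrow> nat" where
  "seg_without1 d m = m - seg_with1 d m"

lemma seg_with1_dim_0: "seg_with1 0 m = 0"
  unfolding seg_with1_def sq_segment_0 by auto

lemma seg_with1_0: "seg_with1 d 0 = 0"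
  unfolding seg_with1_def sq_segment_def by simp

lemma seg_with1_le: "seg_with1 d m \<le> m"
proof (cases "d = 0")
  case False
  then have "seg_with1 d m \<le> card (sq_segment d m)"
    unfolding seg_with1_def using finite_sq_segment by (intro card_mono) auto
  then show ?thesis using card_sq_segment False by simp
qed (simp add: seg_with1_dim_0)

lemma seg_with1_mono: "m \<le> m' \<Longrightarrow> seg_with1 d m \<le> seg_with1 d m'"
  unfolding seg_with1_def using sq_segment_mono finite_sq_segment by (intro card_mono) auto

lemma card_segment_without1:
  assumes "d \<ge> 1"
  shows "card {u \<in> sq_segment d m. 1 \<notin> u} = seg_without1 d m"
proof -
  have "seg_with1 d m + card {u \<in> sq_segment d m. 1 \<notin> u} = card (sq_segment d m)"
    unfolding seg_with1_def by (rule card_filter_add_card_filter_not[OF finite_sq_segment])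
  then show ?thesis unfolding seg_without1_def card_sq_segment[OF assms] by simp
qed

lemma segment_without1_eq:
  assumes d: "d \<ge> 1"
  shows "{u \<in> sq_segment d m. 1 \<notin> u} = shift ` sq_segment d (seg_without1 d m)"
proof -
  define X where "X = {w \<in> binomN d. shift w \<in> sq_segment d m}"
  have im: "{u \<in> sq_segment d m. 1 \<notin> u} = shift ` X"
    unfolding X_def by (rule without1_eq_shift_image[OF sq_segment_subset])
  have "card X = card (shift ` X)" using inj_on_subset[OF inj_shift] by (rule card_image[symmetric]) simp
  also have "\<dots> = seg_without1 d m" unfolding im[symmetric] by (rule card_segment_without1[OF d])
  finally have "card X = seg_without1 d m" .
  moreover have "X = sq_segment d (card X)"
    unfolding X_def
  proof (rule sq_segment_vimage[OF d])
    show "shift ` binomN d \<subseteq> binomN d" using shift_binomN by blast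
    show "inj_on shift (binomN d)" using inj_shift by (rule inj_on_subset) simp
    show "sq_less (shift w) (shift w')"
      if "w \<in> binomN d" "w' \<in> binomN d" "sq_less w w'" for w w'
      using that(3) sq_less_shift[OF binomND(1)[OF that(1)] binomND(1)[OF that(2)]] by simp
  qed
  ultimately show ?thesis using im by simp
qed

lemma segment_with1_eq:
  assumes d: "d \<ge> 2"
  shows "{u \<in> sq_segment d m. 1 \<in> u} = cons_shift 1 ` sq_segment (d - 1) (seg_with1 d m)"
proof -
  define X where "X = {v \<in> binomN (d - 1). cons_shift 1 v \<in> sq_segment d m}"
  have im: "{u \<in> sq_segment d m. 1 \<in> u} = cons_shift 1 ` X"
    unfolding X_def by (rule with1_eq_cons_shift_image[OF sq_segment_subset])
  have "card X = card (cons_shift 1 ` X)"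
    using inj_on_subset[OF inj_on_cons_shift_one] by (rule card_image[symmetric]) (auto simp: X_def)
  also have "\<dots> = seg_with1 d m" unfolding im[symmetric] seg_with1_def ..
  finally have "card X = seg_with1 d m" .
  moreover have "X = sq_segment (d - 1) (card X)"
    unfolding X_def
  proof (rule sq_segment_vimage)
    show "d - 1 \<ge> 1" using d by simp
    show "cons_shift 1 ` binomN (d - 1) \<subseteq> binomN d"
    proof
      fix u assume "u \<in> cons_shift 1 ` binomN (d - 1)"
      then obtain v where v: "v \<in> binomN (d - 1)" "u = cons_shift 1 v" by blast
      show "u \<in> binomN d"
        unfolding v(2) using d by (intro cons_shift_binomN[OF v(1)] one_notin_shift binomND(4)[OF v(1)]) auto
    qed
    show "inj_on (cons_shift 1) (binomN (d - 1))" by (rule inj_on_cons_shift_one)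
    show "sq_less (cons_shift 1 w) (cons_shift 1 w')"
      if "w \<in> binomN (d - 1)" "w' \<in> binomN (d - 1)" "sq_less w w'" for w w'
      using that(3) sq_less_cons_shift_one[OF binomND(1)[OF that(1)] binomND(1)[OF that(2)]
          binomND(4)[OF that(1)] binomND(4)[OF that(2)]] by simp
  qed
  ultimately show ?thesis using im by simp
qed

definition seg_Min_sum :: "nat \<Rightarrow> nat \<Rightarrow> nat" where
  "seg_Min_sum d m = (\<Sum>u\<in>sq_segment d m. Min u)"

lemma Min_eq_1:
  assumes "u \<in> binomN d" "1 \<in> u"
  shows "Min u = 1"
proof (rule Min_eqI)
  show "finite u" using binomND(1)[OF assms(1)] .
  show "1 \<le> y" if "y \<in> u" for y using that binomND(4)[OF assms(1)] by (cases y) auto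
qed (rule assms(2))

text \<open>The members containing 1 contribute 1 each, the others are shifts of an initial segment.\<close>
lemma seg_Min_sum_rec:
  assumes d: "d \<ge> 1"
  shows "seg_Min_sum d m = m + seg_Min_sum d (seg_without1 d m)"
proof -
  let ?A = "{u \<in> sq_segment d m. 1 \<in> u}" and ?B = "{u \<in> sq_segment d m. 1 \<notin> u}"
  let ?S = "sq_segment d (seg_without1 d m)"
  have "seg_Min_sum d m = sum Min ?A + sum Min ?B"
    unfolding seg_Min_sum_def using finite_sq_segment
    by (subst sum.union_disjoint[symmetric]) (auto intro: sum.cong)
  moreover have "sum Min ?A = seg_with1 d m"
  proof -
    have "sum Min ?A = sum (\<lambda>u. 1) ?A"
      using Min_eq_1 sq_segment_subset by (intro sum.cong) blast+
    then show ?thesis unfolding seg_with1_def by simp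
  qed
  moreover have "sum Min ?B = seg_without1 d m + seg_Min_sum d (seg_without1 d m)"
  proof -
    have "sum Min ?B = sum (Min \<circ> shift) ?S"
      unfolding segment_without1_eq[OF d] by (rule sum.reindex[OF inj_on_subset[OF inj_shift]]) simp
    also have "\<dots> = sum (\<lambda>w. Suc (Min w)) ?S"
    proof (rule sum.cong)
      fix w assume "w \<in> ?S"
      then have "w \<in> binomN d" using sq_segment_subset by blast
      then show "(Min \<circ> shift) w = Suc (Min w)"
        using Min_shift binomND(1) binomN_nonempty d by simp
    qed simp
    also have "\<dots> = seg_without1 d m + seg_Min_sum d (seg_without1 d m)"
      unfolding seg_Min_sum_def by (simp add: sum_Suc card_sq_segment[OF d])
    finally show ?thesis .
  qed
  ultimately show ?thesis unfolding seg_without1_def using seg_with1_le[of d m] by simp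
qed

lemma seg_Min_sum_mono: "m \<le> m' \<Longrightarrow> seg_Min_sum d m \<le> seg_Min_sum d m'"
  unfolding seg_Min_sum_def using sq_segment_mono finite_sq_segment by (intro sum_mono2) auto

lemma seg_with1_1:
  assumes d: "d \<ge> 1"
  shows "seg_with1 d 1 = 1"
proof (rule ccontr)
  assume "seg_with1 d 1 \<noteq> 1"
  then have "seg_with1 d 1 = 0" using seg_with1_le[of d 1] by simp
  then have "seg_without1 d 1 = 1" unfolding seg_without1_def by simp
  moreover have "{u \<in> sq_segment d 1. 1 \<in> u} = {}"
    using \<open>seg_with1 d 1 = 0\<close> finite_sq_segment unfolding seg_with1_def by simp
  then have "sq_segment d 1 = {u \<in> sq_segment d 1. 1 \<notin> u}" by blast
  ultimately have "sq_segment d 1 = shift ` sq_segment d 1"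
    using segment_without1_eq[OF d, of 1] by simp
  moreover obtain u where u: "sq_segment d 1 = {u}"
    using card_sq_segment[OF d, of 1] card_1_singletonE by blast
  ultimately have "shift u = u" by auto
  moreover have "u \<in> binomN d" using u sq_segment_subset by blast
  then have f: "finite u" and ne: "u \<noteq> {}" using binomND(1) binomN_nonempty[OF _ d] by blast+
  have "Suc (Max u) \<in> shift u" using Max_in[OF f ne] unfolding shift_def by blast
  then have "Suc (Max u) \<in> u" using \<open>shift u = u\<close> by simp
  then show False using Max_ge[OF f] by fastforce
qed

lemma seg_with1_pos: "d \<ge> 1 \<Longrightarrow> m \<ge> 1 \<Longrightarrow> seg_with1 d m \<ge> 1"
  using seg_with1_1 seg_with1_mono by metis

lemma seg_with1_dim_1_le: "seg_with1 1 m \<le> 1"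
proof -
  have "{u \<in> sq_segment 1 m. 1 \<in> u} \<subseteq> {{1}}"
  proof
    fix u assume "u \<in> {u \<in> sq_segment 1 m. 1 \<in> u}"
    then have "u \<in> binomN 1" "1 \<in> u" using sq_segment_subset by auto
    then obtain a where "u = {a}" using binomND(2) card_1_singletonE by metis
    then show "u \<in> {{1}}" using \<open>1 \<in> u\<close> by simp
  qed
  then have "card {u \<in> sq_segment 1 m. 1 \<in> u} \<le> card {{1::nat}}" by (intro card_mono) auto
  then show ?thesis unfolding seg_with1_def by simp
qed

section \<open>Subadditivity of the number of sets containing 1\<close>

definition subadditive :: "(nat \<Rightarrow> nat) \<Rightarrow> bool" where
  "subadditive f \<longleftrightarrow> (\<forall>x y. f (x + y) \<le> f x + f y)"

definition superadditive :: "(nat \<Rightarrow> nat) \<Rightarrow> bool" where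
  "superadditive f \<longleftrightarrow> (\<forall>x y. f x + f y \<le> f (x + y))"

lemma subadditive_seg_with1_dim_1: "subadditive (seg_with1 1)"
  unfolding subadditive_def
proof (intro allI)
  fix x y :: nat
  show "seg_with1 1 (x + y) \<le> seg_with1 1 x + seg_with1 1 y"
  proof (cases "x = 0")
    case False
    then show ?thesis using seg_with1_pos[of 1 x] seg_with1_dim_1_le[of "x + y"] by simp
  qed simp
qed

lemma superadditive_seg_Min_sum:
  assumes d: "d \<ge> 1" and sub: "subadditive (seg_with1 d)"
  shows "superadditive (seg_Min_sum d)"
proof -
  have "seg_Min_sum d x + seg_Min_sum d y \<le> seg_Min_sum d (x + y)" for x y
  proof (induction "x + y" arbitrary: x y rule: less_induct)
    case less
    show ?case
    proof (cases "x + y = 0")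
      case True then show ?thesis by (simp add: seg_Min_sum_def sq_segment_def)
    next
      case False
      let ?Q = "seg_without1 d"
      have "seg_with1 d (x + y) \<le> seg_with1 d x + seg_with1 d y" using sub unfolding subadditive_def by blast
      moreover have "seg_with1 d (x + y) \<ge> 1" using seg_with1_pos[OF d, of "x + y"] False by simp
      moreover have "seg_with1 d x \<le> x" "seg_with1 d y \<le> y" "seg_with1 d (x + y) \<le> x + y"
        using seg_with1_le by auto
      ultimately have sum: "?Q x + ?Q y \<le> ?Q (x + y)" and lt: "?Q (x + y) < x + y"
        unfolding seg_without1_def by linarith+
      have "?Q x + (?Q (x + y) - ?Q x) < x + y" using lt sum by simp
      then have "seg_Min_sum d (?Q x) + seg_Min_sum d (?Q (x + y) - ?Q x) \<le>
          seg_Min_sum d (?Q x + (?Q (x + y) - ?Q x))"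
        by (rule less(1))
      moreover have "?Q x + (?Q (x + y) - ?Q x) = ?Q (x + y)" using sum by simp
      moreover have "seg_Min_sum d (?Q y) \<le> seg_Min_sum d (?Q (x + y) - ?Q x)"
        using sum by (intro seg_Min_sum_mono) simp
      ultimately have "seg_Min_sum d (?Q x) + seg_Min_sum d (?Q y) \<le> seg_Min_sum d (?Q (x + y))"
        by simp
      then show ?thesis
        using seg_Min_sum_rec[OF d, of x] seg_Min_sum_rec[OF d, of y] seg_Min_sum_rec[OF d, of "x + y"]
        by simp
    qed
  qed
  then show ?thesis unfolding superadditive_def by blast
qed

lemma Min_cons_shift:
  assumes "finite v" "j \<le> Min v"
  shows "Min (cons_shift j v) = j"
proof (rule Min_eqI)
  show "finite (cons_shift j v)" unfolding cons_shift_def using assms(1) by simp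
  show "j \<in> cons_shift j v" unfolding cons_shift_def by simp
  show "j \<le> y" if "y \<in> cons_shift j v" for y
  proof (cases "y = j")
    case False
    with that obtain x where "x \<in> v" "y = Suc x" unfolding cons_shift_def shift_def by blast
    then show ?thesis using assms(2) Min_le[OF assms(1), of x] by simp
  qed simp
qed

lemma cons_shift_eq_iff:
  assumes "finite v" "finite v'" "j \<le> Min v" "j' \<le> Min v'"
  shows "cons_shift j v = cons_shift j' v' \<longleftrightarrow> j = j' \<and> v = v'"
proof
  assume e: "cons_shift j v = cons_shift j' v'"
  then have "j = j'" using Min_cons_shift[OF assms(1,3)] Min_cons_shift[OF assms(2,4)] by simp
  moreover have "j \<notin> shift v" "j' \<notin> shift v'" using shift_notin assms by blast+
  ultimately show "j = j' \<and> v = v'" using cons_shift_inj e by blast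
qed simp

lemma ex_cons_shift_Min_eq:
  assumes d: "d \<ge> 1" and u: "u \<in> binomN (Suc d)"
  shows "\<exists>v\<in>binomN d. 1 \<le> Min u \<and> Min u \<le> Min v \<and> cons_shift (Min u) v = u"
proof -
  have f: "finite u" and u0: "0 \<notin> u" and cu: "card u = Suc d" using binomND[OF u] by auto
  have ju: "Min u \<in> u" using Min_in[OF f] cu by fastforce
  have jle: "Min u \<le> x" if "x \<in> u" for x using Min_le[OF f that] .
  have j1: "1 \<le> Min u" using ju u0 by (cases "Min u") auto
  have "u - {Min u} \<in> binomN d" using binomN_Diff_singleton[OF u ju] by simp
  moreover have "1 \<notin> u - {Min u}" using jle j1 by fastforce
  ultimately obtain v where v: "v \<in> binomN d" "shift v = u - {Min u}" using ex_shift_eq by blast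
  have "Min u \<le> Min v"
  proof -
    have "Min v \<in> v" using Min_in binomND(1)[OF v(1)] binomN_nonempty[OF v(1) d] by blast
    then have "Suc (Min v) \<in> u - {Min u}" using v(2) unfolding shift_def by blast
    then show ?thesis using jle by fastforce
  qed
  moreover have "cons_shift (Min u) v = u" unfolding cons_shift_def v(2) using ju by auto
  ultimately show ?thesis using v(1) j1 by blast
qed

lemma sq_less_cons_shift:
  assumes v': "v' \<in> binomN e" and v: "v \<in> binomN e"
    and j: "j \<le> Min v'" and i: "i \<le> Min v" and lt: "sq_less v' v"
  shows "sq_less (cons_shift j v') (cons_shift i v)"
proof -
  have fv': "finite v'" and fv: "finite v" using binomND(1) v' v by auto
  obtain a where a: "a \<in> v" "a \<notin> v'" "\<forall>x>a. x \<in> v' \<longleftrightarrow> x \<in> v"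
    using lt sq_less_iff[OF fv' fv] by blast
  have ja: "j \<le> a"
  proof (rule ccontr)
    assume "\<not> j \<le> a"
    then have "v' \<subseteq> v" using a(3) j Min_le[OF fv'] by fastforce
    then have "v' = v" using card_subset_eq[OF fv] binomND(2)[OF v'] binomND(2)[OF v] by metis
    then show False using a by simp
  qed
  have ia: "i \<le> a" using Min_le[OF fv a(1)] i by simp
  have fP: "finite (cons_shift j v')" "finite (cons_shift i v)"
    unfolding cons_shift_def using fv fv' by auto
  have "Suc a \<in> cons_shift i v" unfolding cons_shift_def shift_def using a(1) by simp
  moreover have "Suc a \<notin> cons_shift j v'" unfolding cons_shift_def shift_def using a(2) ja by auto
  moreover have "x \<in> cons_shift j v' \<longleftrightarrow> x \<in> cons_shift i v" if x: "x > Suc a" for x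
  proof -
    have "x \<noteq> j" "x \<noteq> i" using x ja ia by auto
    then have "x \<in> cons_shift j v' \<longleftrightarrow> x - 1 \<in> v'" "x \<in> cons_shift i v \<longleftrightarrow> x - 1 \<in> v"
      unfolding cons_shift_def using mem_shift_iff x by auto
    then show ?thesis using a(3) x by simp
  qed
  ultimately show ?thesis using sq_less_iff[OF fP] by blast
qed

lemma sq_less_cons_shift_cons_shift_one_iff:
  assumes d: "d \<ge> 1" and v': "v' \<in> binomN d" and v: "v \<in> binomN d"
    and j: "1 \<le> j" "j \<le> Min v'"
  shows "sq_less (cons_shift j v') (cons_shift 1 v) \<longleftrightarrow> sq_less v' v"
proof
  have fv': "finite v'" and fv: "finite v" using binomND(1) v' v by auto
  have m1: "1 \<le> Min v"
    using Min_in[OF fv binomN_nonempty[OF v d]] binomND(4)[OF v] by (cases "Min v") auto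
  show "sq_less v' v \<Longrightarrow> sq_less (cons_shift j v') (cons_shift 1 v)"
    by (rule sq_less_cons_shift[OF v' v j(2) m1])
  assume h: "sq_less (cons_shift j v') (cons_shift 1 v)"
  have fP: "finite (cons_shift j v')" "finite (cons_shift 1 v)"
    unfolding cons_shift_def using fv fv' by auto
  show "sq_less v' v"
  proof (rule ccontr)
    assume nl: "\<not> sq_less v' v"
    consider "v' = v" | "sq_less v v'" using nl sq_less_total[OF fv' fv] by blast
    then show False
    proof cases
      case 1
      obtain a where a: "a \<in> cons_shift 1 v" "a \<notin> cons_shift j v"
        "\<forall>x>a. x \<in> cons_shift j v \<longleftrightarrow> x \<in> cons_shift 1 v"
        using h sq_less_iff[OF fP] 1 by blast
      have "a = 1" using a(1,2) unfolding cons_shift_def by auto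
      have jv: "j \<notin> shift v" using shift_notin[OF fv] j(2) 1 by simp
      show False
      proof (cases "j = 1")
        case False
        then have "j > a" using j(1) \<open>a = 1\<close> by simp
        then have "j \<in> cons_shift 1 v" using a(3) unfolding cons_shift_def by blast
        then show False using jv False unfolding cons_shift_def by simp
      qed (use h 1 sq_less_irrefl in simp)
    next
      case 2
      then have "sq_less (cons_shift 1 v) (cons_shift j v')" by (rule sq_less_cons_shift[OF v v' m1 j(2)])
      then show False using h sq_less_asym[OF fP] by blast
    qed
  qed
qed

lemma sq_below_cons_shift_one:
  assumes d: "d \<ge> 1" and v: "v \<in> binomN d"
  shows "{u \<in> binomN (Suc d). sq_less u (cons_shift 1 v)} =
    (\<lambda>(v', j). cons_shift j v') ` (SIGMA v':{v' \<in> binomN d. sq_less v' v}. {1..Min v'})"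
proof
  show "{u \<in> binomN (Suc d). sq_less u (cons_shift 1 v)} \<subseteq>
      (\<lambda>(v', j). cons_shift j v') ` (SIGMA v':{v' \<in> binomN d. sq_less v' v}. {1..Min v'})"
  proof
    fix u assume "u \<in> {u \<in> binomN (Suc d). sq_less u (cons_shift 1 v)}"
    then have u: "u \<in> binomN (Suc d)" "sq_less u (cons_shift 1 v)" by auto
    obtain v' where v': "v' \<in> binomN d" "1 \<le> Min u" "Min u \<le> Min v'" "cons_shift (Min u) v' = u"
      using ex_cons_shift_Min_eq[OF d u(1)] by blast
    then have "sq_less v' v"
      using u(2) sq_less_cons_shift_cons_shift_one_iff[OF d v'(1) v v'(2,3)] by simp
    then show "u \<in> (\<lambda>(v', j). cons_shift j v') ` (SIGMA v':{v' \<in> binomN d. sq_less v' v}. {1..Min v'})"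
      using v' by force
  qed
  show "(\<lambda>(v', j). cons_shift j v') ` (SIGMA v':{v' \<in> binomN d. sq_less v' v}. {1..Min v'}) \<subseteq>
      {u \<in> binomN (Suc d). sq_less u (cons_shift 1 v)}"
  proof
    fix u assume "u \<in> (\<lambda>(v', j). cons_shift j v') ` (SIGMA v':{v' \<in> binomN d. sq_less v' v}. {1..Min v'})"
    then obtain v' j where v': "v' \<in> binomN d" "sq_less v' v" and j: "1 \<le> j" "j \<le> Min v'"
      and u: "u = cons_shift j v'" by auto
    have "cons_shift j v' \<in> binomN (Suc d)"
      using cons_shift_binomN[of v' "Suc d" j] v' j shift_notin[OF binomND(1)[OF v'(1)] j(2)] by simp
    moreover have "sq_less (cons_shift j v') (cons_shift 1 v)"
      using sq_less_cons_shift_cons_shift_one_iff[OF d v'(1) v j] v'(2) by simp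
    ultimately show "u \<in> {u \<in> binomN (Suc d). sq_less u (cons_shift 1 v)}" using u by simp
  qed
qed

lemma sq_rank_cons_shift_one:
  assumes d: "d \<ge> 1" and v: "v \<in> binomN d"
  shows "sq_rank (Suc d) (cons_shift 1 v) = seg_Min_sum d (sq_rank d v)"
proof -
  let ?V = "{v' \<in> binomN d. sq_less v' v}"
  let ?S = "SIGMA v':?V. {1..Min v'}"
  have "inj_on (\<lambda>(v', j). cons_shift j v') ?S"
    using cons_shift_eq_iff binomND(1) by (intro inj_onI) auto
  then have "sq_rank (Suc d) (cons_shift 1 v) = card ?S"
    unfolding sq_rank_def sq_below_cons_shift_one[OF d v] by (rule card_image)
  also have "\<dots> = (\<Sum>v'\<in>?V. Min v')"
    using finite_sq_below[OF binomND(1)[OF v]] by (simp add: card_SigmaI)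
  also have "?V = sq_segment d (sq_rank d v)" using sq_below_eq_sq_segment[OF v] .
  finally show ?thesis unfolding seg_Min_sum_def .
qed

lemma seg_Min_sum_less_iff:
  assumes d: "d \<ge> 1"
  shows "seg_Min_sum d i < m \<longleftrightarrow> i < seg_with1 (Suc d) m"
proof -
  obtain v where v: "v \<in> binomN d" "sq_rank d v = i" using sq_rank_surj[OF d] by blast
  have "i < seg_with1 (Suc d) m \<longleftrightarrow> v \<in> sq_segment d (seg_with1 (Suc d) m)"
    unfolding sq_segment_def using v by simp
  also have "\<dots> \<longleftrightarrow> cons_shift 1 v \<in> cons_shift 1 ` sq_segment d (seg_with1 (Suc d) m)"
    using inj_on_image_mem_iff[OF inj_on_cons_shift_one v(1) sq_segment_subset] by simp
  also have "\<dots> \<longleftrightarrow> cons_shift 1 v \<in> {u \<in> sq_segment (Suc d) m. 1 \<in> u}"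
    using segment_with1_eq[of "Suc d" m] d by simp
  also have "\<dots> \<longleftrightarrow> sq_rank (Suc d) (cons_shift 1 v) < m"
    using cons_shift_binomN[OF _ _ _ one_notin_shift[OF binomND(4)[OF v(1)]], of "Suc d"] v(1)
    unfolding sq_segment_def cons_shift_def by simp
  finally show ?thesis using sq_rank_cons_shift_one[OF d v(1)] v(2) by simp
qed

lemma subadditive_seg_with1_Suc:
  assumes d: "d \<ge> 1" and sup: "superadditive (seg_Min_sum d)"
  shows "subadditive (seg_with1 (Suc d))"
  unfolding subadditive_def
proof (intro allI)
  fix x y
  let ?P = "seg_with1 (Suc d)" and ?M = "seg_Min_sum d"
  show "?P (x + y) \<le> ?P x + ?P y"
  proof (cases "?P (x + y) \<le> ?P x")
    case False
    define c where "c = ?P (x + y) - ?P x"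
    have c1: "c \<ge> 1" using False unfolding c_def by simp
    have "?P x + (c - 1) < ?P (x + y)" using False unfolding c_def by simp
    then have "?M (?P x + (c - 1)) < x + y" using seg_Min_sum_less_iff[OF d] by blast
    moreover have "\<not> ?M (?P x) < x" using seg_Min_sum_less_iff[OF d] by blast
    moreover have "?M (?P x) + ?M (c - 1) \<le> ?M (?P x + (c - 1))"
      using sup unfolding superadditive_def by blast
    ultimately have "?M (c - 1) < y" by simp
    then have "c - 1 < ?P y" using seg_Min_sum_less_iff[OF d] by blast
    then show ?thesis using c1 unfolding c_def by simp
  qed simp
qed

lemma subadditive_seg_with1:
  assumes "d \<ge> 1"
  shows "subadditive (seg_with1 d)"
proof -
  have "subadditive (seg_with1 d) \<and> superadditive (seg_Min_sum d)"
    using assms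
  proof (induction d rule: dec_induct)
    case base
    then show ?case using subadditive_seg_with1_dim_1 superadditive_seg_Min_sum by simp
  next
    case (step d)
    then show ?case using subadditive_seg_with1_Suc superadditive_seg_Min_sum by simp
  qed
  then show ?thesis ..
qed

lemma seg_with1_add_le: "d \<ge> 1 \<Longrightarrow> seg_with1 d (x + y) \<le> seg_with1 d x + seg_with1 d y"
  using subadditive_seg_with1 unfolding subadditive_def by blast

section \<open>Block structure of initial segments\<close>

lemma card_binomN_atMost: "card {w \<in> binomN e. w \<subseteq> {..s}} = s choose e"
proof -
  have "{w \<in> binomN e. w \<subseteq> {..s}} = {B. B \<subseteq> {1..s} \<and> card B = e}"
  proof
    show "{w \<in> binomN e. w \<subseteq> {..s}} \<subseteq> {B. B \<subseteq> {1..s} \<and> card B = e}"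
      using binomND by fastforce
    show "{B. B \<subseteq> {1..s} \<and> card B = e} \<subseteq> {w \<in> binomN e. w \<subseteq> {..s}}"
    proof
      fix B assume B: "B \<in> {B. B \<subseteq> {1..s} \<and> card B = e}"
      then have "finite B" "0 \<notin> B" using finite_subset by auto
      then show "B \<in> {w \<in> binomN e. w \<subseteq> {..s}}" using B by (auto intro: binomNI)
    qed
  qed
  then show ?thesis using n_subsets[of "{1..s}" e] by simp
qed

lemma binomN_atMost_eq_sq_segment:
  "{w \<in> binomN e. w \<subseteq> {..s}} = sq_segment e (s choose e)"
proof (cases "e = 0")
  case True
  then show ?thesis by (auto simp: binomN_0 sq_segment_0)
next
  case False
  have "{w \<in> binomN e. w \<subseteq> {..s}} = sq_segment e (card {w \<in> binomN e. w \<subseteq> {..s}})"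
  proof (rule downward_closed_eq_sq_segment)
    show "finite {w \<in> binomN e. w \<subseteq> {..s}}" by (rule finite_subset[of _ "Pow {..s}"]) auto
    show "w \<in> {w \<in> binomN e. w \<subseteq> {..s}}"
      if "u \<in> {w \<in> binomN e. w \<subseteq> {..s}}" "w \<in> binomN e" "sq_less w u" for u w
      using that sq_less_atMost[OF binomND(1)[OF that(2)]] binomND(1) by blast
  qed (use False in auto)
  then show ?thesis unfolding card_binomN_atMost .
qed

lemma subset_atMost_iff_sq_rank:
  assumes "u \<in> binomN e"
  shows "u \<subseteq> {..s} \<longleftrightarrow> sq_rank e u < s choose e"
  using binomN_atMost_eq_sq_segment[of e s] assms unfolding sq_segment_def by blast

lemma insert_Suc_binomN:
  assumes "v \<in> binomN (d - 1)" "d \<ge> 1" "v \<subseteq> {..s}"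
  shows "insert (Suc s) v \<in> binomN d"
proof -
  have "Suc s \<notin> v" using assms(3) by auto
  then show ?thesis using binomND[OF assms(1)] assms(2) by (intro binomNI) auto
qed

lemma inj_on_insert_Suc: "inj_on (insert (Suc s)) {v. v \<subseteq> {..s}}"
  by (rule inj_onI) (metis Diff_insert_absorb atMost_iff mem_Collect_eq not_less_eq_eq order_refl subsetD)

lemma sq_less_insert_Suc:
  assumes "finite w" "w \<subseteq> {..s}" "finite v" "v \<subseteq> {..s}"
  shows "sq_less w (insert (Suc s) v)"
proof -
  have "Suc s \<notin> w" "\<forall>y>Suc s. y \<in> w \<longleftrightarrow> y \<in> insert (Suc s) v" using assms(2,4) by auto
  moreover have "finite (insert (Suc s) v)" using assms(3) by simp
  ultimately show ?thesis using sq_less_iff[OF assms(1)] by blast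
qed

lemma sq_below_insert_Suc:
  assumes d: "d \<ge> 1" and v: "v \<in> binomN (d - 1)" and vs: "v \<subseteq> {..s}"
  shows "{w \<in> binomN d. sq_less w (insert (Suc s) v)} =
    {w \<in> binomN d. w \<subseteq> {..s}} \<union> insert (Suc s) ` {v' \<in> binomN (d - 1). sq_less v' v}"
    (is "?L = ?A \<union> insert ?t ` ?V")
proof
  have fv: "finite v" using binomND(1)[OF v] .
  have tv: "?t \<notin> v" using vs by auto
  show "?L \<subseteq> ?A \<union> insert ?t ` ?V"
  proof
    fix w assume "w \<in> ?L"
    then have w: "w \<in> binomN d" "sq_less w (insert ?t v)" by auto
    have fw: "finite w" using binomND(1)[OF w(1)] .
    have "insert ?t v \<subseteq> {..?t}" using vs by auto
    then have ws: "w \<subseteq> {..?t}" using sq_less_atMost[OF fw _ w(2)] fv by blast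
    show "w \<in> ?A \<union> insert ?t ` ?V"
    proof (cases "?t \<in> w")
      case True
      define v' where "v' = w - {?t}"
      have wv: "w = insert ?t v'" and tv': "?t \<notin> v'" unfolding v'_def using True by auto
      have v'b: "v' \<in> binomN (d - 1)" unfolding v'_def using binomN_Diff_singleton[OF w(1) True] .
      have "sq_less v' v" using w(2) sq_less_insert[OF binomND(1)[OF v'b] fv tv' tv] wv by simp
      then show ?thesis using v'b wv by blast
    next
      case False
      then have "w \<subseteq> {..s}" using ws by (auto simp: le_Suc_eq)
      then show ?thesis using w(1) by blast
    qed
  qed
  show "?A \<union> insert ?t ` ?V \<subseteq> ?L"
  proof
    fix w assume "w \<in> ?A \<union> insert ?t ` ?V"
    then show "w \<in> ?L"
    proof
      assume "w \<in> ?A"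
      then have w: "w \<in> binomN d" "w \<subseteq> {..s}" by auto
      then show ?thesis using sq_less_insert_Suc[OF binomND(1)[OF w(1)] w(2) fv vs] by simp
    next
      assume "w \<in> insert ?t ` ?V"
      then obtain v' where v': "v' \<in> binomN (d - 1)" "sq_less v' v" "w = insert ?t v'" by blast
      have v's: "v' \<subseteq> {..s}" using sq_less_atMost[OF binomND(1)[OF v'(1)] fv v'(2) vs] .
      then have "?t \<notin> v'" by auto
      then have "sq_less w (insert ?t v)"
        using sq_less_insert[OF binomND(1)[OF v'(1)] fv _ tv] v'(2,3) by simp
      then show ?thesis using insert_Suc_binomN[OF v'(1) d v's] v'(3) by simp
    qed
  qed
qed

lemma sq_rank_insert_Suc:
  assumes d: "d \<ge> 1" and v: "v \<in> binomN (d - 1)" and vs: "v \<subseteq> {..s}"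
  shows "sq_rank d (insert (Suc s) v) = (s choose d) + sq_rank (d - 1) v"
proof -
  let ?A = "{w \<in> binomN d. w \<subseteq> {..s}}" and ?V = "{v' \<in> binomN (d - 1). sq_less v' v}"
  have Vs: "?V \<subseteq> {v. v \<subseteq> {..s}}"
    using sq_less_atMost[OF binomND(1) binomND(1)[OF v] _ vs] by blast
  have "sq_rank d (insert (Suc s) v) = card (?A \<union> insert (Suc s) ` ?V)"
    unfolding sq_rank_def sq_below_insert_Suc[OF assms] ..
  also have "\<dots> = card ?A + card (insert (Suc s) ` ?V)"
  proof (rule card_Un_disjoint)
    show "finite ?A" unfolding binomN_atMost_eq_sq_segment by (rule finite_sq_segment)
    show "finite (insert (Suc s) ` ?V)" using finite_sq_below[OF binomND(1)[OF v]] by simp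
    show "?A \<inter> insert (Suc s) ` ?V = {}" by auto
  qed
  also have "card (insert (Suc s) ` ?V) = card ?V"
    using inj_on_subset[OF inj_on_insert_Suc Vs] by (rule card_image)
  finally show ?thesis unfolding card_binomN_atMost sq_rank_def .
qed

lemma sq_segment_block:
  assumes d: "d \<ge> 1" and r: "r \<le> s choose (d - 1)"
  shows "sq_segment d ((s choose d) + r) =
    {w \<in> binomN d. w \<subseteq> {..s}} \<union> insert (Suc s) ` sq_segment (d - 1) r"
proof
  have pascal: "Suc s choose d = (s choose d) + (s choose (d - 1))" using d by (cases d) auto
  show "sq_segment d ((s choose d) + r) \<subseteq> {w \<in> binomN d. w \<subseteq> {..s}} \<union> insert (Suc s) ` sq_segment (d - 1) r"
  proof
    fix u assume "u \<in> sq_segment d ((s choose d) + r)"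
    then have u: "u \<in> binomN d" "sq_rank d u < (s choose d) + r" unfolding sq_segment_def by auto
    show "u \<in> {w \<in> binomN d. w \<subseteq> {..s}} \<union> insert (Suc s) ` sq_segment (d - 1) r"
    proof (cases "u \<subseteq> {..s}")
      case False
      have "sq_rank d u < Suc s choose d" using u(2) pascal r by simp
      then have us: "u \<subseteq> {..Suc s}" using subset_atMost_iff_sq_rank[OF u(1)] by blast
      then have t: "Suc s \<in> u" using False by (auto simp: le_Suc_eq)
      define v where "v = u - {Suc s}"
      have vs: "v \<subseteq> {..s}" unfolding v_def using us by (auto simp: le_Suc_eq)
      have vb: "v \<in> binomN (d - 1)" unfolding v_def using binomN_Diff_singleton[OF u(1) t] .
      have uv: "u = insert (Suc s) v" unfolding v_def using t by auto
      have "sq_rank d u = (s choose d) + sq_rank (d - 1) v" using sq_rank_insert_Suc[OF d vb vs] uv by simp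
      then have "v \<in> sq_segment (d - 1) r" using u(2) vb unfolding sq_segment_def by simp
      then show ?thesis using uv by blast
    qed (use u(1) in blast)
  qed
  show "{w \<in> binomN d. w \<subseteq> {..s}} \<union> insert (Suc s) ` sq_segment (d - 1) r \<subseteq> sq_segment d ((s choose d) + r)"
  proof
    fix u assume "u \<in> {w \<in> binomN d. w \<subseteq> {..s}} \<union> insert (Suc s) ` sq_segment (d - 1) r"
    then show "u \<in> sq_segment d ((s choose d) + r)"
    proof
      assume "u \<in> {w \<in> binomN d. w \<subseteq> {..s}}"
      then show ?thesis using sq_segment_mono[of "s choose d" "(s choose d) + r" d]
        unfolding binomN_atMost_eq_sq_segment by auto
    next
      assume "u \<in> insert (Suc s) ` sq_segment (d - 1) r"
      then obtain v where v: "v \<in> binomN (d - 1)" "sq_rank (d - 1) v < r" "u = insert (Suc s) v"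
        unfolding sq_segment_def by blast
      have vs: "v \<subseteq> {..s}" using subset_atMost_iff_sq_rank[OF v(1)] v(2) r by simp
      have "sq_rank d u = (s choose d) + sq_rank (d - 1) v" using sq_rank_insert_Suc[OF d v(1) vs] v(3) by simp
      then show ?thesis unfolding sq_segment_def using insert_Suc_binomN[OF v(1) d vs] v(2,3) by simp
    qed
  qed
qed

lemma seg_with1_binomial:
  assumes d: "d \<ge> 1" and s: "s \<ge> 1"
  shows "seg_with1 d (s choose d) = (s - 1) choose (d - 1)"
proof -
  let ?A = "{w \<in> binomN d. w \<subseteq> {..s}}"
  have "{v \<in> binomN (d - 1). cons_shift 1 v \<in> ?A} = {v \<in> binomN (d - 1). v \<subseteq> {..s - 1}}"
  proof -
    have "cons_shift 1 v \<in> binomN d" if "v \<in> binomN (d - 1)" for v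
      using cons_shift_binomN[OF that d _ one_notin_shift[OF binomND(4)[OF that]]] by simp
    moreover have "cons_shift 1 v \<subseteq> {..s} \<longleftrightarrow> v \<subseteq> {..s - 1}" for v
      using s unfolding cons_shift_def shift_def by auto
    ultimately show ?thesis by blast
  qed
  then have "{u \<in> ?A. 1 \<in> u} = cons_shift 1 ` {v \<in> binomN (d - 1). v \<subseteq> {..s - 1}}"
    using with1_eq_cons_shift_image[of ?A d] by auto
  then have "seg_with1 d (s choose d) = card (cons_shift 1 ` {v \<in> binomN (d - 1). v \<subseteq> {..s - 1}})"
    unfolding seg_with1_def binomN_atMost_eq_sq_segment by simp
  also have "\<dots> = card {v \<in> binomN (d - 1). v \<subseteq> {..s - 1}}"
    by (rule card_image, rule inj_on_subset[OF inj_on_cons_shift_one]) auto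
  also have "\<dots> = (s - 1) choose (d - 1)" by (rule card_binomN_atMost)
  finally show ?thesis .
qed

lemma seg_with1_block:
  assumes d: "d \<ge> 1" and s: "s \<ge> 1" and r: "r \<le> s choose (d - 1)"
  shows "seg_with1 d ((s choose d) + r) = ((s - 1) choose (d - 1)) + seg_with1 (d - 1) r"
proof -
  let ?A = "{w \<in> binomN d. w \<subseteq> {..s}}" and ?V = "{v \<in> sq_segment (d - 1) r. 1 \<in> v}"
  have Vs: "sq_segment (d - 1) r \<subseteq> {v. v \<subseteq> {..s}}"
  proof
    fix v assume "v \<in> sq_segment (d - 1) r"
    then have "v \<in> binomN (d - 1)" "sq_rank (d - 1) v < s choose (d - 1)"
      using r unfolding sq_segment_def by auto
    then show "v \<in> {v. v \<subseteq> {..s}}" using subset_atMost_iff_sq_rank by blast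
  qed
  have "{u \<in> sq_segment d ((s choose d) + r). 1 \<in> u} = {u \<in> ?A. 1 \<in> u} \<union> insert (Suc s) ` ?V"
    unfolding sq_segment_block[OF d r] using s by auto
  moreover have "card ({u \<in> ?A. 1 \<in> u} \<union> insert (Suc s) ` ?V) =
      card {u \<in> ?A. 1 \<in> u} + card (insert (Suc s) ` ?V)"
  proof (rule card_Un_disjoint)
    show "finite {u \<in> ?A. 1 \<in> u}"
      unfolding binomN_atMost_eq_sq_segment using finite_sq_segment by simp
    show "finite (insert (Suc s) ` ?V)" using finite_sq_segment by simp
    show "{u \<in> ?A. 1 \<in> u} \<inter> insert (Suc s) ` ?V = {}" by auto
  qed
  ultimately have "seg_with1 d ((s choose d) + r) = card {u \<in> ?A. 1 \<in> u} + card (insert (Suc s) ` ?V)"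
    unfolding seg_with1_def by simp
  also have "card {u \<in> ?A. 1 \<in> u} = (s - 1) choose (d - 1)"
    using seg_with1_binomial[OF d s] unfolding seg_with1_def binomN_atMost_eq_sq_segment .
  also have "card (insert (Suc s) ` ?V) = seg_with1 (d - 1) r"
    unfolding seg_with1_def using Vs by (intro card_image inj_on_subset[OF inj_on_insert_Suc]) auto
  finally show ?thesis .
qed

lemma compl_binomN:
  assumes u: "u \<in> binomN e" and us: "u \<subseteq> {..s}"
  shows "{1..s} - u \<in> binomN (s - e)"
proof -
  have "u \<subseteq> {1..s}" using us binomND(3)[OF u] by auto
  then have "card ({1..s} - u) = s - e" using binomND(2)[OF u] by (simp add: card_Diff_subset finite_subset)
  then show ?thesis by (intro binomNI) auto
qed

lemma inj_on_compl: "inj_on (\<lambda>u. {1..s} - u) (Pow {1..s})"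
  by (rule inj_onI) (metis PowD double_diff order_refl)

lemma sq_less_compl:
  assumes "u \<subseteq> {1..s}" "u' \<subseteq> {1..s}"
  shows "sq_less ({1..s} - u) ({1..s} - u') \<longleftrightarrow> sq_less u' u"
proof (cases "u = u'")
  case False
  let ?D = "(u - u') \<union> (u' - u)"
  have D: "(({1..s} - u) - ({1..s} - u')) \<union> (({1..s} - u') - ({1..s} - u)) = ?D"
    using assms by auto
  have "finite u" "finite u'" using finite_subset[OF assms(1)] finite_subset[OF assms(2)] by auto
  then have "Max ?D \<in> ?D" using False by (intro Max_in) auto
  then have "Max ?D \<in> {1..s} - u' \<longleftrightarrow> Max ?D \<in> u" using assms by blast
  moreover have "(u' - u) \<union> (u - u') = ?D" by blast
  moreover have "{1..s} - u \<noteq> {1..s} - u'" using False assms by blast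
  ultimately show ?thesis unfolding sq_less_def D using False by auto
qed (simp add: sq_less_irrefl)

lemma compl_final_part_eq_sq_segment:
  assumes e: "e \<ge> 1" and se: "e < s" and x: "x \<le> s choose e"
  shows "(\<lambda>u. {1..s} - u) ` (sq_segment e (s choose e) - sq_segment e x) =
    sq_segment (s - e) ((s choose e) - x)"
proof -
  let ?c = "\<lambda>u. {1..s} - u" and ?Y = "sq_segment e (s choose e) - sq_segment e x"
  have Y: "u \<in> binomN e \<and> u \<subseteq> {..s}" if "u \<in> ?Y" for u
    using that binomN_atMost_eq_sq_segment[of e s] by blast
  have Y1: "u \<subseteq> {1..s}" if "u \<in> ?Y" for u
    using Y[OF that] binomND(3)[of u e] by auto
  have inj: "inj_on ?c ?Y" using Y1 by (intro inj_on_subset[OF inj_on_compl]) blast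
  have "card (?c ` ?Y) = card ?Y" using inj by (rule card_image)
  also have "\<dots> = (s choose e) - x"
    using card_Diff_subset[OF finite_sq_segment sq_segment_mono[OF x]] card_sq_segment[OF e] by simp
  finally have "card (?c ` ?Y) = (s choose e) - x" .
  moreover have "?c ` ?Y = sq_segment (s - e) (card (?c ` ?Y))"
  proof (rule downward_closed_eq_sq_segment)
    show "s - e \<ge> 1" using se by simp
    show "finite (?c ` ?Y)" using finite_sq_segment by simp
    show "?c ` ?Y \<subseteq> binomN (s - e)" using Y compl_binomN by blast
    fix w0 w assume w0: "w0 \<in> ?c ` ?Y" and w: "w \<in> binomN (s - e)" "sq_less w w0"
    obtain u where u: "u \<in> ?Y" "w0 = ?c u" using w0 by blast
    have "w0 \<subseteq> {..s}" using u(2) by auto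
    then have ws0: "w \<subseteq> {..s}" using sq_less_atMost[OF binomND(1)[OF w(1)] _ w(2)] u(2) by simp
    then have ws: "w \<subseteq> {1..s}" using binomND(3)[OF w(1)] by auto
    define u' where "u' = ?c w"
    have "u' \<in> binomN (s - (s - e))" unfolding u'_def using compl_binomN[OF w(1) ws0] .
    then have u'b: "u' \<in> binomN e" "u' \<subseteq> {..s}" using se unfolding u'_def by auto
    have wu': "w = ?c u'" unfolding u'_def using ws by (simp add: double_diff)
    have "u' \<subseteq> {1..s}" unfolding u'_def by auto
    then have "sq_less u u'" using w(2) u(2) sq_less_compl[of u' s u] Y1[OF u(1)] wu' by simp
    then have "u' \<notin> sq_segment e x"
      using u(1) u'b(1) sq_segment_downward_closed[of u' e x u] Y[OF u(1)] by blast
    moreover have "u' \<in> sq_segment e (s choose e)"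
      using u'b binomN_atMost_eq_sq_segment[of e s] by blast
    ultimately have "u' \<in> ?Y" by blast
    then show "w \<in> ?c ` ?Y" using wu' by blast
  qed
  ultimately show ?thesis by simp
qed

lemma seg_with1_binomial_split:
  assumes e: "e \<ge> 1" and se: "e < s" and x: "x \<le> s choose e"
  shows "seg_with1 e (s choose e) = seg_with1 e x + seg_without1 (s - e) ((s choose e) - x)"
proof -
  let ?c = "\<lambda>u. {1..s} - u" and ?Y = "sq_segment e (s choose e) - sq_segment e x"
  have Y1: "?Y \<subseteq> Pow {1..s}"
  proof
    fix u assume "u \<in> ?Y"
    then have "u \<in> binomN e" "u \<subseteq> {..s}" using binomN_atMost_eq_sq_segment[of e s] by auto
    then show "u \<in> Pow {1..s}" using binomND(3)[of u e] by auto
  qed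
  have "{u \<in> sq_segment e (s choose e). 1 \<in> u} = {u \<in> sq_segment e x. 1 \<in> u} \<union> {u \<in> ?Y. 1 \<in> u}"
    using sq_segment_mono[OF x] by blast
  moreover have "card ({u \<in> sq_segment e x. 1 \<in> u} \<union> {u \<in> ?Y. 1 \<in> u}) =
      card {u \<in> sq_segment e x. 1 \<in> u} + card {u \<in> ?Y. 1 \<in> u}"
    using finite_sq_segment by (intro card_Un_disjoint) auto
  ultimately have "seg_with1 e (s choose e) = seg_with1 e x + card {u \<in> ?Y. 1 \<in> u}"
    unfolding seg_with1_def by simp
  also have "card {u \<in> ?Y. 1 \<in> u} = card (?c ` {u \<in> ?Y. 1 \<in> u})"
    using Y1 by (intro card_image[symmetric] inj_on_subset[OF inj_on_compl]) blast
  also have "?c ` {u \<in> ?Y. 1 \<in> u} = {w \<in> ?c ` ?Y. 1 \<notin> w}"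
  proof -
    have "1 \<in> u \<longleftrightarrow> 1 \<notin> ?c u" for u using se by simp
    then show ?thesis by blast
  qed
  also have "card \<dots> = seg_without1 (s - e) ((s choose e) - x)"
    unfolding compl_final_part_eq_sq_segment[OF assms] using se by (intro card_segment_without1) simp
  finally show ?thesis .
qed

lemma seg_without1_add_ge:
  assumes "d \<ge> 1"
  shows "seg_without1 d x + seg_without1 d y \<le> seg_without1 d (x + y)"
  using seg_with1_add_le[OF assms, of x y] seg_with1_le[of d x] seg_with1_le[of d y]
    seg_with1_le[of d "x + y"] unfolding seg_without1_def by linarith

lemma seg_with1_exchange:
  assumes e: "e \<ge> 1" and rd: "r + \<delta> \<le> s choose e"
  shows "seg_with1 e (s choose e) + seg_with1 e r \<le> seg_with1 e ((s choose e) - \<delta>) + seg_with1 e (r + \<delta>)"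
proof (cases "e < s")
  case False
  then have "s choose e \<le> 1" by (cases "s = e") (auto simp: binomial_eq_0)
  then consider "\<delta> = 0" | "\<delta> = 1" "r = 0" "s choose e = 1" using rd by linarith
  then show ?thesis by cases (simp_all add: seg_with1_0)
next
  case True
  let ?B = "s choose e" and ?Q = "seg_without1 (s - e)"
  have "seg_with1 e ?B = seg_with1 e (?B - \<delta>) + ?Q \<delta>"
    using seg_with1_binomial_split[OF e True, of "?B - \<delta>"] rd by simp
  moreover have "seg_with1 e ?B = seg_with1 e r + ?Q (?B - r - \<delta> + \<delta>)"
    using seg_with1_binomial_split[OF e True, of r] rd by (simp add: diff_add)
  moreover have "seg_with1 e ?B = seg_with1 e (r + \<delta>) + ?Q (?B - r - \<delta>)"
    using seg_with1_binomial_split[OF e True, of "r + \<delta>"] rd by simp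
  moreover have "?Q \<delta> + ?Q (?B - r - \<delta>) \<le> ?Q (?B - r - \<delta> + \<delta>)"
    using seg_without1_add_ge[of "s - e"] True by (simp add: add.commute)
  ultimately show ?thesis by linarith
qed

lemma le_binomial_add: "d \<ge> 1 \<Longrightarrow> n \<le> (d - 1 + n) choose d"
proof (induction n)
  case (Suc n)
  have "(d - 1 + Suc n) choose d = ((d - 1 + n) choose d) + ((d - 1 + n) choose (d - 1))"
    using Suc.prems by (cases d) auto
  moreover have "0 < (d - 1 + n) choose (d - 1)" by (rule zero_less_binomial) simp
  moreover have "n \<le> (d - 1 + n) choose d" using Suc by simp
  moreover have "d - 1 + Suc n = Suc (d - 1 + n)" by simp
  ultimately show ?case by (simp only:)
qed simp

lemma binomial_block_decomposition:
  assumes d: "d \<ge> 1" and m: "m \<ge> 1"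
  obtains s r where "m = (s choose d) + r" "1 \<le> r" "r \<le> s choose (d - 1)"
proof -
  define t where "t = (LEAST t. m \<le> t choose d)"
  have tm: "m \<le> t choose d" unfolding t_def by (rule LeastI[of _ "d - 1 + m"]) (rule le_binomial_add[OF d])
  have "t \<noteq> 0"
  proof
    assume "t = 0"
    then show False using tm d m by (cases d) auto
  qed
  then obtain s where ts: "t = Suc s" using not0_implies_Suc by blast
  have "\<not> m \<le> s choose d"
  proof
    assume "m \<le> s choose d"
    then have "t \<le> s" unfolding t_def by (rule Least_le)
    then show False using ts by simp
  qed
  moreover have "m \<le> (s choose d) + (s choose (d - 1))" using tm ts d by (cases d) auto
  ultimately show ?thesis using that[of s "m - (s choose d)"] by linarith
qed

lemma seg_with1_split_exchange_case:
  assumes d: "d \<ge> 1" and s: "s \<ge> 1" and rb: "r \<le> b" "b \<le> s choose d"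
  shows "((s - 1) choose (d - 1)) + seg_with1 d r \<le> seg_with1 d ((s choose d) + r - b) + seg_with1 d b"
proof -
  let ?\<delta> = "(s choose d) - b"
  have "seg_with1 d (s choose d) + seg_with1 d r \<le> seg_with1 d ((s choose d) - ?\<delta>) + seg_with1 d (r + ?\<delta>)"
    using rb by (intro seg_with1_exchange[OF d]) simp
  moreover have "(s choose d) - ?\<delta> = b" "r + ?\<delta> = (s choose d) + r - b" using rb by auto
  ultimately show ?thesis using seg_with1_binomial[OF d s] by simp
qed

lemma seg_with1_split_induction_case:
  assumes d: "d \<ge> 1" and s: "s \<ge> 1"
    and IH: "\<And>m b. b < seg_with1 d m \<Longrightarrow> seg_with1 d m \<le> seg_with1 d (m - b) + seg_with1 (d - 1) b"
    and r: "r \<le> Suc s choose d" and b: "s choose d < b" "b - (s choose d) < seg_with1 d r"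
  shows "((s - 1) choose (d - 1)) + seg_with1 d r \<le> seg_with1 d ((s choose d) + r - b) + seg_with1 d b"
proof -
  let ?\<rho> = "b - (s choose d)"
  have "seg_with1 d r \<le> seg_with1 d (Suc s choose d)" using seg_with1_mono r by blast
  also have "\<dots> = s choose (d - 1)" using seg_with1_binomial[OF d] by simp
  finally have "?\<rho> \<le> s choose (d - 1)" using b(2) by simp
  then have "seg_with1 d b = ((s - 1) choose (d - 1)) + seg_with1 (d - 1) ?\<rho>"
    using seg_with1_block[OF d s, of ?\<rho>] b(1) by simp
  moreover have "seg_with1 d r \<le> seg_with1 d (r - ?\<rho>) + seg_with1 (d - 1) ?\<rho>" using IH b(2) .
  moreover have "r - ?\<rho> = (s choose d) + r - b" using b by simp
  ultimately show ?thesis by simp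
qed

lemma seg_with1_split_across_block:
  assumes d: "d \<ge> 1"
    and IH: "\<And>m b. b < seg_with1 d m \<Longrightarrow> seg_with1 d m \<le> seg_with1 d (m - b) + seg_with1 (d - 1) b"
    and r: "r \<le> Suc s choose d" and rb: "r \<le> b" and b: "b < (s choose d) + seg_with1 d r"
  shows "(s choose d) + seg_with1 d r \<le> seg_with1 (Suc d) ((Suc s choose Suc d) + r - b) + seg_with1 d b"
proof -
  have b_lt: "b < (s choose d) + r" using b seg_with1_le[of d r] by simp
  have s: "s \<ge> 1"
  proof (rule ccontr)
    assume "\<not> s \<ge> 1"
    then have "s choose d = 0" using d by simp
    then show False using b_lt rb by linarith
  qed
  have "(Suc s choose Suc d) + r - b = (s choose Suc d) + ((s choose d) + r - b)"
    using b_lt by simp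
  moreover have "(s choose d) + r - b \<le> s choose d" using rb by simp
  ultimately have "seg_with1 (Suc d) ((Suc s choose Suc d) + r - b) =
      ((s - 1) choose d) + seg_with1 d ((s choose d) + r - b)"
    using seg_with1_block[of "Suc d" s "(s choose d) + r - b"] s by simp
  moreover have "s choose d = ((s - 1) choose d) + ((s - 1) choose (d - 1))"
    using s d by (cases s, simp, cases d, auto)
  moreover have "((s - 1) choose (d - 1)) + seg_with1 d r \<le>
      seg_with1 d ((s choose d) + r - b) + seg_with1 d b"
  proof (cases "b \<le> s choose d")
    case True
    then show ?thesis using seg_with1_split_exchange_case[OF d s] rb by simp
  next
    case False
    then show ?thesis using seg_with1_split_induction_case[OF d s IH r] b by simp
  qed
  ultimately show ?thesis by simp
qed

lemma seg_with1_le_split: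
  assumes "d \<ge> 1" and "b < seg_with1 d m"
  shows "seg_with1 d m \<le> seg_with1 d (m - b) + seg_with1 (d - 1) b"
  using assms
proof (induction d arbitrary: m b rule: dec_induct)
  case base
  then have "b = 0" using seg_with1_dim_1_le[of m] by simp
  then show ?case by simp
next
  case (step d)
  have d: "d \<ge> 1" using step.hyps(1) .
  have "m \<ge> 1" using step.prems seg_with1_0 by (cases m) auto
  then obtain s r where sr: "m = (s choose Suc d) + r" "1 \<le> r" "r \<le> s choose d"
    using binomial_block_decomposition[of "Suc d" m] by auto
  have s: "s \<ge> 1" using sr(2,3) d by (cases s) (auto simp: binomial_eq_0)
  have Pm: "seg_with1 (Suc d) m = ((s - 1) choose d) + seg_with1 d r"
    using seg_with1_block[of "Suc d" s r] s sr by simp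
  show ?case
  proof (cases "b < r")
    case True
    have "seg_with1 (Suc d) (m - b) = ((s - 1) choose d) + seg_with1 d (r - b)"
      using seg_with1_block[of "Suc d" s "r - b"] s sr True by (simp add: add_diff_assoc)
    moreover have "seg_with1 d r \<le> seg_with1 d (r - b) + seg_with1 d b"
      using seg_with1_add_le[OF d, of "r - b" b] True by simp
    ultimately show ?thesis using Pm by simp
  next
    case False
    then have "((s - 1) choose d) + seg_with1 d r \<le>
        seg_with1 (Suc d) ((Suc (s - 1) choose Suc d) + r - b) + seg_with1 d b"
      using seg_with1_split_across_block[OF d step.IH, of r "s - 1" b] sr(3) s step.prems Pm by simp
    then show ?thesis using Pm sr(1) s by simp
  qed
qed

lemma seg_without1_combine:
  assumes d: "d \<ge> 1" and a: "seg_without1 d (a + b) < a"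
  shows "seg_without1 (d - 1) b + seg_without1 d a \<le> seg_without1 d (a + b)"
proof -
  have l: "seg_with1 d a \<le> a" "seg_with1 d (a + b) \<le> a + b" "seg_with1 (d - 1) b \<le> b"
    using seg_with1_le by auto
  then have "b < seg_with1 d (a + b)" using a unfolding seg_without1_def by simp
  then have "seg_with1 d (a + b) \<le> seg_with1 d a + seg_with1 (d - 1) b"
    using seg_with1_le_split[OF d] by fastforce
  then show ?thesis unfolding seg_without1_def using l by simp
qed

section \<open>Skip maps\<close>

definition skip :: "nat \<Rightarrow> nat \<Rightarrow> nat" where
  "skip k x = (if x < k then x else Suc x)"

definition skip_preimage :: "nat \<Rightarrow> nat set set \<Rightarrow> nat set set" where
  "skip_preimage d G = {u \<in> binomN d. \<forall>k\<ge>1. skip k ` u \<in> G}"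

lemma strict_mono_skip: "strict_mono (skip k)"
  unfolding strict_mono_def skip_def by auto

lemma skip_binomN:
  assumes "u \<in> binomN d"
  shows "skip k ` u \<in> binomN d"
proof -
  have "card (skip k ` u) = card u"
    using strict_mono_imp_inj_on[OF strict_mono_skip] by (rule card_image)
  moreover have "0 \<notin> skip k ` u" using binomND(4)[OF assms] unfolding skip_def by auto
  ultimately show ?thesis using binomND[OF assms] by (intro binomNI) auto
qed

lemma skip_1_image:
  assumes "0 \<notin> u"
  shows "skip 1 ` u = shift u"
  unfolding shift_def
proof (rule image_cong)
  show "skip 1 x = Suc x" if "x \<in> u" for x
    using that assms unfolding skip_def by (cases x) auto
qed simp

lemma skip_Suc_Suc: "skip (Suc k) (Suc x) = Suc (skip k x)"
  unfolding skip_def by simp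

lemma shift_skip_image: "shift (skip k ` w) = skip (Suc k) ` shift w"
  unfolding shift_def by (simp add: image_image skip_Suc_Suc)

lemma cons_shift_one_skip_image:
  "k \<ge> 1 \<Longrightarrow> cons_shift 1 (skip k ` v) = skip (Suc k) ` cons_shift 1 v"
  unfolding cons_shift_def shift_skip_image by (simp add: skip_def)

lemma skip_preimage_subset: "skip_preimage d G \<subseteq> {w \<in> binomN d. shift w \<in> G}"
proof
  fix u assume "u \<in> skip_preimage d G"
  then have "u \<in> binomN d" "skip 1 ` u \<in> G" unfolding skip_preimage_def by auto
  then show "u \<in> {w \<in> binomN d. shift w \<in> G}" using skip_1_image[OF binomND(4)] by simp
qed

lemma finite_vimage_shift:
  assumes "finite G"
  shows "finite {w \<in> binomN d. shift w \<in> G}"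
proof (rule finite_subset)
  show "finite (shift -` G)" using assms inj_shift by (rule finite_vimageI)
qed auto

lemma finite_vimage_cons_shift_one:
  assumes "finite G"
  shows "finite {v \<in> binomN e. cons_shift 1 v \<in> G}"
proof (rule finite_subset)
  show "finite (cons_shift 1 -` G \<inter> binomN e)"
    using assms inj_on_cons_shift_one by (rule finite_vimage_IntI)
qed auto

lemma skip_preimage_split:
  assumes d: "d \<ge> 1" and G: "G \<subseteq> binomN d"
  shows "skip_preimage d G \<subseteq>
    cons_shift 1 ` skip_preimage (d - 1) {v \<in> binomN (d - 1). cons_shift 1 v \<in> G} \<union>
    shift ` skip_preimage d {w \<in> binomN d. shift w \<in> G}"
proof
  fix u assume "u \<in> skip_preimage d G"
  then have u: "u \<in> binomN d" and skips: "\<And>k. k \<ge> 1 \<Longrightarrow> skip k ` u \<in> G"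
    unfolding skip_preimage_def by auto
  show "u \<in> cons_shift 1 ` skip_preimage (d - 1) {v \<in> binomN (d - 1). cons_shift 1 v \<in> G} \<union>
    shift ` skip_preimage d {w \<in> binomN d. shift w \<in> G}"
  proof (cases "1 \<in> u")
    case True
    then obtain v where v: "v \<in> binomN (d - 1)" "cons_shift 1 v = u" using ex_cons_shift_one_eq u by blast
    have "cons_shift 1 (skip k ` v) \<in> G" if "k \<ge> 1" for k
      using skips[of "Suc k"] cons_shift_one_skip_image[OF that] v(2) by simp
    then have "v \<in> skip_preimage (d - 1) {v \<in> binomN (d - 1). cons_shift 1 v \<in> G}"
      unfolding skip_preimage_def using v(1) skip_binomN[of v "d - 1"] by blast
    then show ?thesis using v(2) by blast
  next
    case False
    then obtain w where w: "w \<in> binomN d" "shift w = u" using ex_shift_eq u by blast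
    have "shift (skip k ` w) \<in> G" if "k \<ge> 1" for k
      using skips[of "Suc k"] shift_skip_image w(2) by simp
    then have "w \<in> skip_preimage d {w \<in> binomN d. shift w \<in> G}"
      unfolding skip_preimage_def using w(1) skip_binomN[of w d] by blast
    then show ?thesis using w(2) by blast
  qed
qed

lemma card_skip_preimage_le_step:
  assumes d: "d \<ge> 1" and G: "finite G" "G \<subseteq> binomN d"
  defines "G0 \<equiv> {w \<in> binomN d. shift w \<in> G}" and "G1 \<equiv> {v \<in> binomN (d - 1). cons_shift 1 v \<in> G}"
  assumes IH0: "card (skip_preimage d G0) \<le> seg_without1 d (card G0)"
    and IH1: "card (skip_preimage (d - 1) G1) \<le> seg_without1 (d - 1) (card G1)"
  shows "card (skip_preimage d G) \<le> seg_without1 d (card G)"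
proof -
  have fin: "finite G0" "finite G1"
    unfolding G0_def G1_def using finite_vimage_shift finite_vimage_cons_shift_one G(1) by auto
  have cG: "card G = card G0 + card G1"
    unfolding G0_def G1_def using card_split_by_one[OF G] .
  have "card (skip_preimage d G) \<le> card G0"
    unfolding G0_def using skip_preimage_subset fin(1) unfolding G0_def by (rule card_mono[rotated])
  moreover have "card (skip_preimage d G) \<le> card (skip_preimage (d - 1) G1) + card (skip_preimage d G0)"
  proof -
    have "finite (skip_preimage d G0)" "finite (skip_preimage (d - 1) G1)"
      using fin skip_preimage_subset finite_vimage_shift finite_subset by blast+
    then have "card (skip_preimage d G) \<le> card (cons_shift 1 ` skip_preimage (d - 1) G1 \<union> shift ` skip_preimage d G0)"
      using skip_preimage_split[OF d G(2)] unfolding G0_def G1_def by (intro card_mono) auto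
    also have "\<dots> \<le> card (cons_shift 1 ` skip_preimage (d - 1) G1) + card (shift ` skip_preimage d G0)"
      by (rule card_Un_le)
    also have "\<dots> \<le> card (skip_preimage (d - 1) G1) + card (skip_preimage d G0)"
      using \<open>finite (skip_preimage d G0)\<close> \<open>finite (skip_preimage (d - 1) G1)\<close>
      by (intro add_mono card_image_le)
    finally show ?thesis .
  qed
  ultimately show ?thesis
    using IH0 IH1 seg_without1_combine[OF d, of "card G0" "card G1"] unfolding cG by fastforce
qed

lemma card_skip_preimage_le_Suc:
  assumes IH: "\<And>G. finite G \<Longrightarrow> G \<subseteq> binomN d \<Longrightarrow> card (skip_preimage d G) \<le> seg_without1 d (card G)"
    and G: "\<forall>u\<in>G. u \<subseteq> {..n}" "finite G" "G \<subseteq> binomN (Suc d)"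
  shows "card (skip_preimage (Suc d) G) \<le> seg_without1 (Suc d) (card G)"
  using G
proof (induction n arbitrary: G)
  case 0
  have "u \<notin> G" for u
  proof
    assume "u \<in> G"
    then have "u \<subseteq> {..0}" "u \<in> binomN (Suc d)" using 0 by auto
    then have "u = {}" using binomND(4) by fastforce
    then show False using \<open>u \<in> binomN (Suc d)\<close> binomND(2) by fastforce
  qed
  then have "skip_preimage (Suc d) G = {}" using skip_preimage_subset[of "Suc d" G] by blast
  then show ?case by simp
next
  case (Suc n)
  let ?G0 = "{w \<in> binomN (Suc d). shift w \<in> G}" and ?G1 = "{v \<in> binomN d. cons_shift 1 v \<in> G}"
  have "w \<subseteq> {..n}" if "w \<in> ?G0" for w
  proof
    fix x assume "x \<in> w"
    then have "Suc x \<in> shift w" unfolding shift_def by blast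
    then show "x \<in> {..n}" using that Suc.prems(1) by auto
  qed
  then have "card (skip_preimage (Suc d) ?G0) \<le> seg_without1 (Suc d) (card ?G0)"
    using Suc.IH[of ?G0] finite_vimage_shift[OF Suc.prems(2)] by blast
  moreover have "card (skip_preimage d ?G1) \<le> seg_without1 d (card ?G1)"
    using IH finite_vimage_cons_shift_one[OF Suc.prems(2)] by blast
  ultimately show ?case
    using card_skip_preimage_le_step[of "Suc d" G] Suc.prems(2,3) by simp
qed

lemma card_skip_preimage_le:
  assumes "finite G" "G \<subseteq> binomN d"
  shows "card (skip_preimage d G) \<le> seg_without1 d (card G)"
  using assms
proof (induction d arbitrary: G)
  case 0
  have "skip_preimage 0 G \<subseteq> G" unfolding skip_preimage_def binomN_0 by auto
  then have "card (skip_preimage 0 G) \<le> card G" using 0 by (intro card_mono) auto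
  then show ?case unfolding seg_without1_def seg_with1_dim_0 by simp
next
  case (Suc d)
  have "finite (\<Union>G)" using Suc.prems(1)
    by (rule finite_Union) (meson Suc.prems(2) binomND(1) subsetD)
  then obtain n where "\<forall>x\<in>\<Union>G. x \<le> n" using finite_nat_set_iff_bounded_le by blast
  then have "\<forall>u\<in>G. u \<subseteq> {..n}" by blast
  then show ?case using card_skip_preimage_le_Suc[OF Suc.IH _ Suc.prems] by blast
qed

section \<open>The maps of \<open>Inc1\<close> are skip maps\<close>

lemma Inc1_value:
  assumes "\<pi> \<in> Inc1" "j \<ge> 1"
  shows "\<pi> j = j \<or> \<pi> j = Suc j"
  using assms(2)
proof (induction j rule: dec_induct)
  case base
  then show ?case using assms(1) unfolding Inc1_def by fastforce
next
  case (step j)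
  have "\<pi> j < \<pi> (Suc j)" "\<pi> (Suc j) \<le> Suc j + 1"
    using assms(1) step.hyps(1) unfolding Inc1_def by auto
  then show ?case using step.IH by auto
qed

text \<open>Once \<open>\<pi> j = j + 1\<close>, strict monotonicity and \<open>\<pi> i \<le> i + 1\<close> force
  \<open>\<pi> i = i + 1\<close> for all \<open>i \<ge> j\<close>; before that \<open>\<pi>\<close> is the identity.\<close>
lemma Inc1_image_eq_skip_image:
  assumes "\<pi> \<in> Inc1" "finite u" "0 \<notin> u"
  obtains k where "k \<ge> 1" "\<pi> ` u = skip k ` u"
proof -
  define k where "k = (if \<exists>j\<ge>1. \<pi> j = Suc j then LEAST j. j \<ge> 1 \<and> \<pi> j = Suc j else Suc (Max (insert 0 u)))"
  have k1: "k \<ge> 1" unfolding k_def by (auto intro: LeastI2_ex)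
  have below: "\<pi> x = x" if "x \<ge> 1" "x < k" for x
  proof -
    have "\<not> \<pi> x = Suc x"
      using that not_less_Least[of x "\<lambda>j. j \<ge> 1 \<and> \<pi> j = Suc j"] unfolding k_def
      by (auto split: if_splits)
    then show ?thesis using Inc1_value[OF assms(1) that(1)] by blast
  qed
  have above: "\<pi> x = Suc x" if "x \<ge> k" "x \<in> u" for x
  proof (cases "\<exists>j\<ge>1. \<pi> j = Suc j")
    case True
    then have k: "k \<ge> 1" "\<pi> k = Suc k" unfolding k_def using LeastI_ex[OF True] by simp_all
    from that(1) show ?thesis
    proof (induction x rule: dec_induct)
      case (step x)
      then have "x \<ge> 1" using k(1) by simp
      then have "\<pi> x < \<pi> (Suc x)" using assms(1) unfolding Inc1_def by auto
      then show ?case using step Inc1_value[OF assms(1), of "Suc x"] by auto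
    qed (use k in simp)
  next
    case False
    then have "k = Suc (Max (insert 0 u))" unfolding k_def by (rule if_not_P)
    moreover have "x \<le> Max (insert 0 u)" using that(2) assms(2) by simp
    ultimately show ?thesis using that(1) by simp
  qed
  have "\<pi> ` u = skip k ` u"
  proof (rule image_cong)
    show "\<pi> x = skip k x" if "x \<in> u" for x
      using that assms(3) below above unfolding skip_def by (cases x) auto
  qed simp
  then show ?thesis using that k1 by blast
qed

lemma skip_Inc1: "k \<ge> 1 \<Longrightarrow> skip k \<in> Inc1"
  unfolding Inc1_def skip_def by auto

lemma Inc_eq_skip_images:
  assumes "X \<subseteq> binomN d"
  shows "Inc X = {skip k ` u | u k. u \<in> X \<and> k \<ge> 1}"
proof
  show "Inc X \<subseteq> {skip k ` u | u k. u \<in> X \<and> k \<ge> 1}"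
  proof
    fix w assume "w \<in> Inc X"
    then obtain u \<pi> where u: "w = \<pi> ` u" "u \<in> X" "\<pi> \<in> Inc1" unfolding Inc_def by blast
    have "finite u" "0 \<notin> u" using u(2) assms binomND(1,4) by blast+
    then obtain k where "k \<ge> 1" "\<pi> ` u = skip k ` u" using Inc1_image_eq_skip_image[OF u(3)] by blast
    then show "w \<in> {skip k ` u | u k. u \<in> X \<and> k \<ge> 1}" using u by blast
  qed
  show "{skip k ` u | u k. u \<in> X \<and> k \<ge> 1} \<subseteq> Inc X"
    unfolding Inc_def using skip_Inc1 by blast
qed

lemma Inc_mono: "A \<subseteq> B \<Longrightarrow> Inc A \<subseteq> Inc B"
  unfolding Inc_def by blast

lemma Inc_subset_binomN: "X \<subseteq> binomN d \<Longrightarrow> Inc X \<subseteq> binomN d"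
  unfolding Inc_eq_skip_images using skip_binomN by blast

text \<open>On \<open>u\<close>, \<open>skip k\<close> agrees with \<open>skip (min k (Suc (Max u)))\<close>.\<close>
lemma finite_Inc:
  assumes "finite F" "F \<subseteq> binomN d"
  shows "finite (Inc F)"
proof (rule finite_subset)
  show "Inc F \<subseteq> (\<Union>u\<in>F. (\<lambda>k. skip k ` u) ` {..Suc (Max (insert 0 u))})"
  proof
    fix w assume "w \<in> Inc F"
    then obtain u k where uk: "w = skip k ` u" "u \<in> F" unfolding Inc_eq_skip_images[OF assms(2)] by blast
    let ?M = "Suc (Max (insert 0 u))"
    have "finite u" using uk(2) assms(2) binomND(1) by blast
    then have "x < ?M" if "x \<in> u" for x using that by (simp add: le_imp_less_Suc)
    then have "skip k ` u = skip (min k ?M) ` u" unfolding skip_def by (intro image_cong) auto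
    then show "w \<in> (\<Union>u\<in>F. (\<lambda>k. skip k ` u) ` {..Suc (Max (insert 0 u))})" using uk by force
  qed
qed (use assms(1) in simp)

lemma mem_skip_image_iff: "z \<in> skip k ` u \<longleftrightarrow> z < k \<and> z \<in> u \<or> k < z \<and> z - 1 \<in> u"
proof
  assume "z \<in> skip k ` u"
  then obtain y where "y \<in> u" "z = skip k y" by blast
  then show "z < k \<and> z \<in> u \<or> k < z \<and> z - 1 \<in> u" unfolding skip_def by (cases "y < k") auto
next
  assume "z < k \<and> z \<in> u \<or> k < z \<and> z - 1 \<in> u"
  then show "z \<in> skip k ` u"
  proof
    assume "k < z \<and> z - 1 \<in> u"
    then have "z = skip k (z - 1)" "z - 1 \<in> u" unfolding skip_def by auto
    then show ?thesis by blast
  qed (force simp: skip_def)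
qed

lemma skip_image_le_shift:
  assumes "finite u" "0 \<notin> u"
  shows "skip k ` u = shift u \<or> sq_less (skip k ` u) (shift u)"
proof (cases "\<exists>x\<in>u. x < k")
  case False
  then have "skip k ` u = shift u" unfolding skip_def shift_def by (intro image_cong) auto
  then show ?thesis ..
next
  case True
  define x0 where "x0 = Max {x \<in> u. x < k}"
  have "x0 \<in> {x \<in> u. x < k}" unfolding x0_def using True assms(1) by (intro Max_in) auto
  then have x0: "x0 \<in> u" "x0 < k" by auto
  have x0max: "x \<le> x0" if "x \<in> u" "x < k" for x
    using that assms(1) unfolding x0_def by (intro Max_ge) auto
  have "Suc x0 \<in> shift u" unfolding shift_def using x0 by simp
  moreover have "Suc x0 \<notin> skip k ` u" using x0 x0max[of "Suc x0"] by (auto simp: mem_skip_image_iff)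
  moreover have "z \<in> skip k ` u \<longleftrightarrow> z \<in> shift u" if z: "z > Suc x0" for z
  proof -
    have "k < z" if "z - 1 \<in> u"
    proof (rule ccontr)
      assume "\<not> k < z"
      then have "z - 1 < k" using z by simp
      then show False using x0max[OF that] z by simp
    qed
    then show ?thesis using z x0max[of z] by (auto simp: mem_skip_image_iff mem_shift_iff)
  qed
  moreover have "finite (skip k ` u)" "finite (shift u)" using assms(1) by simp_all
  ultimately have "sq_less (skip k ` u) (shift u)" using sq_less_iff by blast
  then show ?thesis ..
qed

lemma Inc_sq_segment_without1_subset:
  assumes d: "d \<ge> 1"
  shows "Inc (sq_segment d (seg_without1 d m)) \<subseteq> sq_segment d m"
proof
  fix w assume "w \<in> Inc (sq_segment d (seg_without1 d m))"
  then obtain u k where uk: "w = skip k ` u" "u \<in> sq_segment d (seg_without1 d m)"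
    unfolding Inc_eq_skip_images[OF sq_segment_subset] by blast
  have u: "u \<in> binomN d" using uk(2) sq_segment_subset by blast
  have "shift u \<in> sq_segment d m" using segment_without1_eq[OF d, of m] uk(2) by blast
  moreover have "w = shift u \<or> sq_less w (shift u)"
    using skip_image_le_shift[OF binomND(1,4)[OF u]] uk(1) by simp
  ultimately show "w \<in> sq_segment d m"
    using sq_segment_downward_closed skip_binomN[OF u] uk(1) by blast
qed

theorem theorem3p5:
  fixes d :: nat and F :: "nat set set"
  assumes "d \<ge> 1" and "finite F" and "F \<subseteq> binomN d"
  shows "Inc (compression d F) \<subseteq> compression d (Inc F)"
proof -
  let ?G = "Inc F"
  have G: "finite ?G" "?G \<subseteq> binomN d" using finite_Inc Inc_subset_binomN assms(2,3) by blast+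
  have "F \<subseteq> skip_preimage d ?G"
    unfolding skip_preimage_def Inc_eq_skip_images[OF assms(3)] using assms(3) by blast
  moreover have "finite (skip_preimage d ?G)"
    using skip_preimage_subset finite_vimage_shift[OF G(1)] by (rule finite_subset)
  ultimately have "card F \<le> card (skip_preimage d ?G)" by (rule card_mono[rotated])
  also have "\<dots> \<le> seg_without1 d (card ?G)" using card_skip_preimage_le[OF G] .
  finally have "Inc (compression d F) \<subseteq> Inc (sq_segment d (seg_without1 d (card ?G)))"
    unfolding compression_eq_sq_segment by (intro Inc_mono sq_segment_mono)
  also have "\<dots> \<subseteq> compression d ?G"
    unfolding compression_eq_sq_segment by (rule Inc_sq_segment_without1_subset[OF assms(1)])
  finally show ?thesis .
qed

end
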